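(* Let $\mathcal H:\mathbb{R}^d\to\mathbb{R}^d$ satisfy $\|\mathcal H(x)-\mathcal H(y)\|_2\le\|x-y\|_2$ for all $x,y$, and suppose its fixed-point set $\mathcal X$ is non-empty and bounded. Fix a deterministic $x_0$, and let $x_{k+1}=x_k+\epsilon_k(\mathcal H(x_k)-x_k+w_k)$ with positive stepsizes, where, with $\mathcal F_k$ the $\sigma$-algebra generated by $x_0,w_0,\dots,x_{k-1},w_{k-1},x_k$, $\mathbb{E}[w_k\mid\mathcal F_k]=0$ and $\mathbb{E}[\|w_k\|_2^2\mid\mathcal F_k]\le A$ for a constant $A>0$. Let $\mathrm{dist}(x,\mathcal X)=\inf_{x^*\in\mathcal X}\|x-x^*\|_2$ and $D=\sup_{x^*\in\mathcal X}\|x_0-x^*\|_2$. Then: (a) if $\sum_k\epsilon_k=\infty$ and $\sum_k\epsilon_k^2<\infty$, then $\mathrm{dist}(x_k,\mathcal X)\to0$ almost surely; (b) if $\epsilon_k\equiv\epsilon\in(0,1)$, then for all $k\ge0$, $\min_{0\le i\le k}\mathbb{E}[\|\mathcal H(x_i)-x_i\|_2^2]\le\frac{D^2}{(k+1)(1-\epsilon)\epsilon}+\frac{A\epsilon}{1-\epsilon}$; (c) if $\epsilon_k=\epsilon/\sqrt{k+1}$ with $\epsilon\in(0,1)$, then for all $k\ge1$, $\min_{0\le i\le k}\mathbb{E}[\|\mathcal H(x_i)-x_i\|_2^2]\le\frac{D^2+A\epsilon^2(1+\log k)}{2(1-\epsilon)\epsilon((k+1)^{1/2}-1)}$; (d)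 if $\epsilon_k=\epsilon/(k+1)$ with $\epsilon\in(0,1)$, then for all $k\ge1$, $\min_{0\le i\le k}\mathbb{E}[\|\mathcal H(x_i)-x_i\|_2^2]\le\frac{D^2+2A\epsilon^2}{(1-\epsilon)\epsilon}\frac{1}{\log(k+1)}$.
   Context: $\|\cdot\|_2$ is the Euclidean norm on $\mathbb{R}^d$. *)

theory Defs
  imports "HOL-Probability.Probability"
begin

definition nat_filtration ::
  "'a measure \<Rightarrow> (nat \<Rightarrow> 'a \<Rightarrow> 'v::topological_space) \<Rightarrow> (nat \<Rightarrow> 'a \<Rightarrow> 'v) \<Rightarrow> nat \<Rightarrow> 'a measure" where
  "nat_filtration M x w k =
     sigma (space M)
       ((\<Union>j\<in>{..k}. {x j -` B \<inter> space M | B. B \<in> sets borel}) \<union>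
        (\<Union>j\<in>{..<k}. {w j -` B \<inter> space M | B. B \<in> sets borel}))"

end

theory Submission
  imports Defs
begin

text \<open>
  For a fixed point \<open>p\<close>, nonexpansiveness of \<open>H\<close> gives the Krasnosel'skii--Mann inequality
  \<open>\<parallel>y - p + \<epsilon> (H y - y)\<parallel>\<^sup>2 \<le> \<parallel>y - p\<parallel>\<^sup>2 - \<epsilon> (1 - \<epsilon>) \<parallel>H y - y\<parallel>\<^sup>2\<close>. Hence
  \<open>V\<^sub>k = \<parallel>x\<^sub>k - p\<parallel>\<^sup>2\<close> decreases by \<open>\<epsilon>\<^sub>k (1 - \<epsilon>\<^sub>k) \<parallel>H x\<^sub>k - x\<^sub>k\<parallel>\<^sup>2\<close> up to a cross term
  \<open>2 \<epsilon>\<^sub>k \<langle>z\<^sub>k, w\<^sub>k\<rangle>\<close> with \<open>z\<^sub>k\<close> known at time \<open>k\<close>, which has mean zero, and a term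
  \<open>\<epsilon>\<^sub>k\<^sup>2 \<parallel>w\<^sub>k\<parallel>\<^sup>2\<close> of mean at most \<open>A \<epsilon>\<^sub>k\<^sup>2\<close>. Taking expectations and telescoping bounds
  \<open>min\<^sub>i\<^sub>\<le>\<^sub>k E\<parallel>H x\<^sub>i - x\<^sub>i\<parallel>\<^sup>2 \<cdot> (1 - \<epsilon>) \<Sum>\<^sub>i\<^sub>\<le>\<^sub>k \<epsilon>\<^sub>i\<close> by \<open>\<parallel>x\<^sub>0 - p\<parallel>\<^sup>2 + A \<Sum>\<^sub>i\<^sub>\<le>\<^sub>k \<epsilon>\<^sub>i\<^sup>2\<close>,
  and the rates (b)--(d) are estimates of these two sums.

  For (a), the cross terms form a martingale transform with summable variances, which converges
  almost surely by Kolmogorov's maximal inequality. Pathwise, a deterministic Robbins--Siegmund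
  argument then makes \<open>\<parallel>x\<^sub>k - p\<parallel>\<close> convergent for every \<open>p\<close> in a countable dense set of
  fixed points and \<open>\<Sum> \<epsilon>\<^sub>k \<parallel>H x\<^sub>k - x\<^sub>k\<parallel>\<^sup>2\<close> finite; as \<open>\<Sum> \<epsilon>\<^sub>k = \<infinity>\<close>, the residual is small
  infinitely often, so some cluster point is a fixed point, and Opial's argument shows that the
  whole sequence converges to it.
\<close>

section \<open>Estimates for the stepsize sums\<close>

lemma harm_le_one_plus_ln:
  assumes "n \<ge> 1"
  shows "harm n \<le> 1 + ln (real n)"
proof -
  obtain m where n: "n = Suc m" using assms by (cases n) auto
  have "harm (Suc m) - ln (real (Suc m)) \<le> harm (Suc 0) - ln (real (Suc 0))"
    using decseqD[OF decseq_harm_diff_ln, of 0 m] by simp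
  then show ?thesis by (simp add: n harm_expand(2))
qed

lemma sum_inverse_sq_le_two: "(\<Sum>i<n. 1 / (real i + 1)\<^sup>2) \<le> 2"
proof -
  have "(\<Sum>i<n. 1 / (real i + 1)\<^sup>2) \<le> 2 - 2 / (real n + 1)"
  proof (induction n)
    case (Suc n)
    have "1 / (real n + 1)\<^sup>2 \<le> 2 / ((real n + 1) * (real n + 2))"
      by (simp add: divide_simps power2_eq_square)
    also have "\<dots> = 2 / (real n + 1) - 2 / (real n + 2)"
      by (simp add: field_simps)
    finally have "1 / (real n + 1)\<^sup>2 \<le> 2 / (real n + 1) - 2 / (real n + 2)" .
    with Suc show ?case by (simp add: add.commute)
  qed simp
  also have "\<dots> \<le> 2" by simp
  finally show ?thesis .
qed

lemma sum_inverse_sqrt_ge: "2 * (sqrt (real n + 1) - 1) \<le> (\<Sum>i<n. 1 / sqrt (real i + 1))"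
proof (induction n)
  case (Suc n)
  define a where "a = sqrt (real n + 1)"
  define b where "b = sqrt (real n + 2)"
  have "a > 0" unfolding a_def by simp
  have "b\<^sup>2 = a\<^sup>2 + 1" unfolding a_def b_def by simp
  then have "2 * a * (b - a) \<le> 1"
    using zero_le_power2[of "b - a"] by (simp add: power2_eq_square algebra_simps)
  with \<open>a > 0\<close> have "2 * (b - a) \<le> 1 / a" by (simp add: field_simps)
  with Suc show ?case unfolding a_def b_def by (simp add: add.commute)
qed simp

text \<open>For \<open>\<epsilon>\<^sub>k = \<epsilon> / \<surd>(k + 1)\<close> the telescoped bound involves \<open>harm (k + 1)\<close> and
  \<open>\<surd>(k + 2)\<close>; this inequality trades them for the \<open>1 + ln k\<close> and \<open>\<surd>(k + 1)\<close> of rate (c).\<close>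

lemma harm_sqrt_tradeoff:
  assumes "1 \<le> k"
  shows "harm (Suc k) * (sqrt (real k + 1) - 1) \<le> (1 + ln (real k)) * (sqrt (real k + 2) - 1)"
proof -
  define a where "a = sqrt (real k + 1)"
  define b where "b = sqrt (real k + 2)"
  define L where "L = 1 + ln (real k)"
  have "1 < a" "a < b" "b\<^sup>2 = a\<^sup>2 + 1" unfolding a_def b_def using assms by auto
  have "1 \<le> L" unfolding L_def using assms by simp
  have core: "(a - 1) * (a + b) \<le> L * a\<^sup>2"
  proof (cases "3 \<le> k")
    case True
    then have "ln 3 \<le> ln (real k)" by simp
    then have "2 \<le> L" using ln3_gt_1 unfolding L_def by linarith
    have "b\<^sup>2 \<le> (a + 1)\<^sup>2" using \<open>b\<^sup>2 = a\<^sup>2 + 1\<close> \<open>1 < a\<close> by (simp add: power2_eq_square algebra_simps)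
    then have "b \<le> a + 1" by (rule power2_le_imp_le) (use \<open>1 < a\<close> in simp)
    then have "(a - 1) * (a + b) \<le> 2 * a\<^sup>2"
      using \<open>1 < a\<close> mult_left_mono[of b "a + 1" "a - 1"] by (simp add: power2_eq_square algebra_simps)
    also have "\<dots> \<le> L * a\<^sup>2" using mult_right_mono[OF \<open>2 \<le> L\<close>, of "a\<^sup>2"] by simp
    finally show ?thesis .
  next
    case False
    then have "b \<le> 2" unfolding b_def using real_sqrt_le_mono[of "real k + 2" 4] by simp
    then have "(a - 1) * (b - 1) \<le> 1 * 1" using \<open>1 < a\<close> \<open>a < b\<close> by (intro mult_mono) auto
    then have "(a - 1) * (a + b) \<le> a\<^sup>2" by (simp add: power2_eq_square algebra_simps)
    also have "\<dots> \<le> L * a\<^sup>2" using mult_right_mono[OF \<open>1 \<le> L\<close>, of "a\<^sup>2"] by simp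
    finally show ?thesis .
  qed
  have "0 < a + b" using \<open>1 < a\<close> \<open>a < b\<close> by simp
  have b_minus_a: "b - a = 1 / (a + b)"
    using \<open>b\<^sup>2 = a\<^sup>2 + 1\<close> \<open>0 < a + b\<close> by (simp add: field_simps power2_eq_square)
  have "(a - 1) / a\<^sup>2 \<le> L * (b - a)"
    unfolding b_minus_a using core \<open>0 < a + b\<close> \<open>1 < a\<close> by (simp add: field_simps)
  have "harm (Suc k) \<le> L + 1 / a\<^sup>2"
    using harm_le_one_plus_ln[OF assms] unfolding L_def a_def by (simp add: harm_Suc inverse_eq_divide add.commute)
  then have "harm (Suc k) * (a - 1) \<le> (L + 1 / a\<^sup>2) * (a - 1)"
    using \<open>1 < a\<close> by (intro mult_right_mono) auto
  also have "\<dots> \<le> L * (b - 1)"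
    using \<open>(a - 1) / a\<^sup>2 \<le> L * (b - a)\<close> by (simp add: algebra_simps)
  finally show ?thesis unfolding a_def b_def L_def .
qed

section \<open>Deterministic convergence lemmas\<close>

lemma summable_descent_nonneg:
  fixes V d e :: "nat \<Rightarrow> real"
  assumes V_nonneg: "\<And>k. 0 \<le> V k" and descent: "\<And>k. V (Suc k) \<le> V k - d k + e k"
    and e: "summable e" and d_nonneg: "\<And>k. 0 \<le> d k"
  shows "convergent V \<and> summable d"
proof -
  define P where "P n = (\<Sum>k<n. e k)" for n
  have P: "convergent P" unfolding P_def using e by (simp add: summable_iff_convergent)
  then have "Bseq P" by (rule convergent_imp_Bseq)
  then obtain B where B: "\<And>n. \<bar>P n\<bar> \<le> B"
    unfolding Bseq_def by (metis real_norm_def less_imp_le)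
  define U where "U n = V n - P n" for n
  have U_step: "d n \<le> U n - U (Suc n)" for n
    using descent[of n] unfolding U_def P_def by simp
  have U_lower: "- B \<le> U n" for n
    using V_nonneg[of n] B[of n] unfolding U_def by auto
  have "decseq U"
  proof (rule decseq_SucI)
    show "U (Suc n) \<le> U n" for n using U_step[of n] d_nonneg[of n] by linarith
  qed
  then obtain L where "U \<longlonglongrightarrow> L" using U_lower decseq_convergent by blast
  then have "convergent (\<lambda>n. U n + P n)" using P by (intro convergent_add) (auto simp: convergent_def)
  moreover have "summable d"
  proof (rule summableI_nonneg_bounded)
    show "(\<Sum>k<n. d k) \<le> U 0 + B" for n
    proof -
      have "(\<Sum>k<n. d k) \<le> (\<Sum>k<n. U k - U (Suc k))" by (intro sum_mono U_step)
      also have "\<dots> = U 0 - U n" by (rule sum_lessThan_telescope')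
      finally show ?thesis using U_lower[of n] by simp
    qed
  qed (rule d_nonneg)
  ultimately show ?thesis unfolding U_def by simp
qed

lemma summable_descent:
  fixes V d e :: "nat \<Rightarrow> real"
  assumes "\<And>k. 0 \<le> V k" and "\<And>k. V (Suc k) \<le> V k - d k + e k"
    and "summable e" and "\<And>k. K \<le> k \<Longrightarrow> 0 \<le> d k"
  shows "convergent V \<and> summable d"
proof -
  have "convergent (\<lambda>k. V (k + K)) \<and> summable (\<lambda>k. d (k + K))"
    using assms by (intro summable_descent_nonneg[where e = "\<lambda>k. e (k + K)"]) auto
  then show ?thesis by (simp add: convergent_ignore_initial_segment)
qed

lemma not_summable_if_sums_at_top:
  fixes a :: "nat \<Rightarrow> real"
  assumes "filterlim (\<lambda>n. \<Sum>k<n. a k) at_top sequentially"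
  shows "\<not> summable a"
proof
  assume "summable a"
  then have "(\<lambda>n. \<Sum>k<n. a k) \<longlonglongrightarrow> suminf a" by (rule summable_LIMSEQ)
  with assms show False
    by (metis filterlim_at_top_imp_at_infinity not_tendsto_and_filterlim_at_infinity
      trivial_limit_sequentially)
qed

lemma frequently_lt_of_summable_weighted:
  fixes a b :: "nat \<Rightarrow> real"
  assumes a: "\<not> summable a" "\<And>k. 0 \<le> a k" and ab: "summable (\<lambda>k. a k * b k)" and "0 < \<delta>"
  shows "\<exists>k\<ge>K. b k < \<delta>"
proof (rule ccontr)
  assume "\<not> (\<exists>k\<ge>K. b k < \<delta>)"
  then have big: "\<delta> \<le> b k" if "K \<le> k" for k using that by (auto simp: not_less)
  have "summable a"
  proof (rule summable_comparison_test'[where N = K])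
    show "summable (\<lambda>k. a k * b k / \<delta>)" using ab by (rule summable_divide)
    show "norm (a k) \<le> a k * b k / \<delta>" if "K \<le> k" for k
    proof -
      have "a k * \<delta> \<le> a k * b k" using big[OF that] a(2)[of k] by (rule mult_left_mono)
      then show ?thesis using \<open>0 < \<delta>\<close> a(2)[of k] by (simp add: pos_le_divide_eq)
    qed
  qed
  with a(1) show False ..
qed

lemma summable_power2_imp_eventually_le:
  fixes f :: "nat \<Rightarrow> real"
  assumes "summable (\<lambda>k. (f k)\<^sup>2)" and "0 < c"
  obtains K where "\<And>k. K \<le> k \<Longrightarrow> \<bar>f k\<bar> \<le> c"
proof -
  have "(\<lambda>k. (f k)\<^sup>2) \<longlonglongrightarrow> 0" using assms(1) by (rule summable_LIMSEQ_zero)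
  from order_tendstoD(2)[OF this, of "c\<^sup>2"] obtain K where "\<And>k. K \<le> k \<Longrightarrow> \<bar>f k\<bar>\<^sup>2 < c\<^sup>2"
    using \<open>0 < c\<close> by (auto simp: eventually_sequentially)
  then have "\<bar>f k\<bar> \<le> c" if "K \<le> k" for k
    using power2_less_imp_less[of "\<bar>f k\<bar>" c] that \<open>0 < c\<close> by simp
  then show ?thesis by (rule that)
qed

lemma convergent_norm_diff_closure:
  fixes xs :: "nat \<Rightarrow> 'v::real_normed_vector"
  assumes conv: "\<And>q. q \<in> Q \<Longrightarrow> convergent (\<lambda>k. norm (xs k - q))" and p: "p \<in> closure Q"
  shows "convergent (\<lambda>k. norm (xs k - p))"
  unfolding Cauchy_convergent_iff[symmetric] Cauchy_def
proof (intro allI impI)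
  fix e :: real assume "e > 0"
  then obtain q where q: "q \<in> Q" "dist q p < e / 3"
    using p closure_approachable[of p Q] by (metis divide_pos_pos zero_less_numeral)
  have "Cauchy (\<lambda>k. norm (xs k - q))" using conv[OF q(1)] by (simp add: Cauchy_convergent_iff)
  then obtain N where N: "\<And>m n. N \<le> m \<Longrightarrow> N \<le> n \<Longrightarrow> dist (norm (xs m - q)) (norm (xs n - q)) < e / 3"
    using \<open>e > 0\<close> unfolding Cauchy_def by (metis divide_pos_pos zero_less_numeral)
  have close: "\<bar>norm (xs k - p) - norm (xs k - q)\<bar> \<le> dist q p" for k
    using norm_triangle_ineq3[of "xs k - p" "xs k - q"] by (simp add: dist_norm)
  show "\<exists>N. \<forall>m\<ge>N. \<forall>n\<ge>N. dist (norm (xs m - p)) (norm (xs n - p)) < e"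
  proof (intro exI allI impI)
    fix m n assume "N \<le> m" "N \<le> n"
    with N have "dist (norm (xs m - q)) (norm (xs n - q)) < e / 3" by blast
    then show "dist (norm (xs m - p)) (norm (xs n - p)) < e"
      using close[of m] close[of n] q(2) unfolding dist_real_def abs_le_iff abs_less_iff by linarith
  qed
qed

lemma tendsto_of_convergent_norm_diff:
  fixes xs :: "nat \<Rightarrow> 'v::real_normed_vector"
  assumes conv: "convergent (\<lambda>k. norm (xs k - p))"
    and g: "filterlim g sequentially sequentially" and sub: "(\<lambda>n. xs (g n)) \<longlonglongrightarrow> p"
  shows "xs \<longlonglongrightarrow> p"
proof -
  obtain L where L: "(\<lambda>k. norm (xs k - p)) \<longlonglongrightarrow> L" using conv unfolding convergent_def by blast
  have "(\<lambda>n. norm (xs (g n) - p)) \<longlonglongrightarrow> L" using filterlim_compose[OF L g] by (simp add: o_def)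
  moreover have "(\<lambda>n. norm (xs (g n) - p)) \<longlonglongrightarrow> 0" using tendsto_norm_zero[OF LIM_zero[OF sub]] .
  ultimately have "L = 0" using LIMSEQ_unique by blast
  with L show ?thesis by (simp add: tendsto_norm_zero_iff LIM_zero_iff)
qed

lemma fixpoint_limit_of_subsequence:
  fixes xs :: "nat \<Rightarrow> 'v::euclidean_space" and H :: "'v \<Rightarrow> 'v"
  assumes H: "continuous_on UNIV H" and bdd: "bounded (range xs)"
    and small: "\<And>\<delta> K. \<delta> > 0 \<Longrightarrow> \<exists>k\<ge>K. norm (H (xs k) - xs k) < \<delta>"
  obtains p g where "H p = p" "filterlim g sequentially sequentially" "(\<lambda>n. xs (g n)) \<longlonglongrightarrow> p"
proof -
  have "\<forall>n. \<exists>k\<ge>n. norm (H (xs k) - xs k) < 1 / Suc n" using small by simp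
  then obtain f where f: "\<And>n. n \<le> f n" "\<And>n. norm (H (xs (f n)) - xs (f n)) < 1 / Suc n"
    by metis
  have "bounded (range (\<lambda>n. xs (f n)))" using bdd by (rule bounded_subset) auto
  then obtain p r where r: "strict_mono r" and pr: "(\<lambda>n. xs (f (r n))) \<longlonglongrightarrow> p"
    using bounded_imp_convergent_subsequence unfolding o_def by blast
  have g: "filterlim (\<lambda>n. f (r n)) sequentially sequentially"
    using f(1) seq_suble[OF r]
    by (intro filterlim_at_top_mono[OF filterlim_ident] always_eventually allI) (blast intro: order_trans)
  have "(\<lambda>n. H (xs (f (r n))) - xs (f (r n))) \<longlonglongrightarrow> 0"
  proof (rule tendsto_norm_zero_cancel, rule Lim_null_comparison)
    show "\<forall>\<^sub>F n in sequentially. norm (norm (H (xs (f (r n))) - xs (f (r n)))) \<le> 1 / Suc (r n)"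
      using f(2) by (intro always_eventually) (simp add: less_imp_le)
    show "(\<lambda>n. 1 / real (Suc (r n))) \<longlonglongrightarrow> 0"
      using LIMSEQ_subseq_LIMSEQ[OF LIMSEQ_inverse_real_of_nat r] by (simp add: o_def inverse_eq_divide)
  qed
  moreover have "(\<lambda>n. H (xs (f (r n))) - xs (f (r n))) \<longlonglongrightarrow> H p - p"
    by (intro tendsto_intros pr continuous_on_tendsto_compose[OF H pr]) auto
  ultimately have "H p - p = 0" by (rule LIMSEQ_unique[rotated])
  then have "H p = p" by simp
  then show ?thesis using g pr by (rule that)
qed

lemma infdist_fixpoints_tendsto_zero:
  fixes xs :: "nat \<Rightarrow> 'v::euclidean_space" and H :: "'v \<Rightarrow> 'v"
  assumes H: "continuous_on UNIV H"
    and Q: "Q \<subseteq> {z. H z = z}" "{z. H z = z} \<subseteq> closure Q" "Q \<noteq> {}"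
    and conv: "\<And>q. q \<in> Q \<Longrightarrow> convergent (\<lambda>k. norm (xs k - q))"
    and small: "\<And>\<delta> K. \<delta> > 0 \<Longrightarrow> \<exists>k\<ge>K. norm (H (xs k) - xs k) < \<delta>"
  shows "(\<lambda>k. infdist (xs k) {z. H z = z}) \<longlonglongrightarrow> 0"
proof -
  obtain q where q: "q \<in> Q" using Q(3) by auto
  have "Bseq (\<lambda>k. norm (xs k - q))" using conv[OF q] by (rule convergent_imp_Bseq)
  then have "bounded (range (\<lambda>k. xs k - q))" by (simp add: Bseq_eq_bounded bounded_norm_comp)
  then have "bounded ((+) q ` range (\<lambda>k. xs k - q))" by (rule bounded_translation)
  then have "bounded (range xs)" by (simp add: image_image)
  from H this small obtain p g where p: "H p = p" and g: "filterlim g sequentially sequentially"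
    and sub: "(\<lambda>n. xs (g n)) \<longlonglongrightarrow> p"
    by (rule fixpoint_limit_of_subsequence)
  have "p \<in> closure Q" using Q(2) p by blast
  with conv have "convergent (\<lambda>k. norm (xs k - p))" by (rule convergent_norm_diff_closure)
  then have "xs \<longlonglongrightarrow> p" using g sub by (rule tendsto_of_convergent_norm_diff)
  then have "(\<lambda>k. infdist (xs k) {z. H z = z}) \<longlonglongrightarrow> infdist p {z. H z = z}"
    by (rule tendsto_infdist)
  then show ?thesis using p by simp
qed

section \<open>Martingale difference noise\<close>

lemma AE_summable_of_summable_integral:
  fixes q :: "nat \<Rightarrow> 'a \<Rightarrow> real"
  assumes meas: "\<And>k. q k \<in> borel_measurable M" and nonneg: "\<And>k \<omega>. 0 \<le> q k \<omega>"
    and int: "\<And>k. integrable M (q k)" and sum: "summable (\<lambda>k. \<integral>\<omega>. q k \<omega> \<partial>M)"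
  shows "AE \<omega> in M. summable (\<lambda>k. q k \<omega>)"
proof -
  have "(\<integral>\<^sup>+ \<omega>. (\<Sum>k. ennreal (q k \<omega>)) \<partial>M) = (\<Sum>k. \<integral>\<^sup>+ \<omega>. ennreal (q k \<omega>) \<partial>M)"
    using meas by (intro nn_integral_suminf) auto
  also have "\<dots> = (\<Sum>k. ennreal (\<integral>\<omega>. q k \<omega> \<partial>M))"
    using int nonneg by (simp add: nn_integral_eq_integral)
  also have "\<dots> \<noteq> \<top>"
    using sum nonneg by (intro ennreal_suminf_neq_top) auto
  finally have "AE \<omega> in M. (\<Sum>k. ennreal (q k \<omega>)) \<noteq> \<infinity>"
    by (intro nn_integral_noteq_infinite) (use meas in auto)
  then show ?thesis
    by eventually_elim (use nonneg in \<open>auto intro: summable_suminf_not_top\<close>)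
qed

lemma stopped_sum_exit:
  fixes a :: "nat \<Rightarrow> real"
  assumes "0 < l" and exit: "j \<in> {m..n}" "l \<le> \<bar>\<Sum>k\<in>{m..<j}. a k\<bar>"
  shows "l \<le> \<bar>\<Sum>k\<in>{m..<n}. if \<forall>i\<in>{m..k}. \<bar>\<Sum>t\<in>{m..<i}. a t\<bar> < l then a k else 0\<bar>"
proof -
  define P where "P j \<longleftrightarrow> j \<in> {m..n} \<and> l \<le> \<bar>\<Sum>k\<in>{m..<j}. a k\<bar>" for j
  define j0 where "j0 = (LEAST j. P j)"
  have P_j0: "P j0" unfolding j0_def using exit by (intro LeastI[of P j]) (simp add: P_def)
  have before: "\<not> P j" if "j < j0" for j using that not_less_Least unfolding j0_def by blast
  have "m < j0" using P_j0 \<open>0 < l\<close> unfolding P_def by (cases "j0 = m") auto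
  have stopped: "(\<forall>i\<in>{m..k}. \<bar>\<Sum>t\<in>{m..<i}. a t\<bar> < l) \<longleftrightarrow> k < j0" if "k \<in> {m..<n}" for k
  proof
    assume "\<forall>i\<in>{m..k}. \<bar>\<Sum>t\<in>{m..<i}. a t\<bar> < l"
    then show "k < j0" using P_j0 \<open>m < j0\<close> unfolding P_def by (meson atLeastAtMost_iff not_le not_less)
  next
    assume "k < j0"
    show "\<forall>i\<in>{m..k}. \<bar>\<Sum>t\<in>{m..<i}. a t\<bar> < l"
    proof
      fix i assume "i \<in> {m..k}"
      with \<open>k < j0\<close> that have "i < j0" "i \<in> {m..n}" by auto
      then show "\<bar>\<Sum>t\<in>{m..<i}. a t\<bar> < l" using before unfolding P_def by force
    qed
  qed
  have "(\<Sum>k\<in>{m..<n}. if \<forall>i\<in>{m..k}. \<bar>\<Sum>t\<in>{m..<i}. a t\<bar> < l then a k else 0)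
      = (\<Sum>k\<in>{m..<n}. if k \<in> {..<j0} then a k else 0)"
    by (rule sum.cong) (simp_all add: stopped)
  also have "\<dots> = (\<Sum>k\<in>{m..<n} \<inter> {..<j0}. a k)" by (simp add: sum.inter_restrict)
  also have "{m..<n} \<inter> {..<j0} = {m..<j0}" using P_j0 unfolding P_def by auto
  finally show ?thesis using P_j0 unfolding P_def by simp
qed

text \<open>The noise \<open>w k\<close> is revealed at time \<open>k + 1\<close>, but has conditional mean zero given \<open>F k\<close>;
  the mean condition is stated coordinatewise since \<open>real_cond_exp\<close> is real-valued.\<close>

locale martingale_difference_noise = prob_space M
  for M :: "'a measure" and F :: "nat \<Rightarrow> 'a measure"
    and w :: "nat \<Rightarrow> 'a \<Rightarrow> 'v::euclidean_space" and A :: real +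
  assumes subalgebra_F: "\<And>k. subalgebra M (F k)"
    and sets_F_mono: "\<And>j k. j \<le> k \<Longrightarrow> sets (F j) \<subseteq> sets (F k)"
    and w_F: "\<And>k. w k \<in> borel_measurable (F (Suc k))"
    and w_mean: "\<And>k b. b \<in> Basis \<Longrightarrow>
        AE \<omega> in M. real_cond_exp M (F k) (\<lambda>\<eta>. w k \<eta> \<bullet> b) \<omega> = 0"
    and w_var: "\<And>k. AE \<omega> in M.
        nn_cond_exp M (F k) (\<lambda>\<eta>. ennreal ((norm (w k \<eta>))\<^sup>2)) \<omega> \<le> ennreal A"
    and A_nonneg: "0 \<le> A"
begin

lemma sigma_finite_subalgebra_F: "sigma_finite_subalgebra M (F k)"
  by (rule finite_measure_subalgebra_is_sigma_finite)
    (simp add: finite_measure_subalgebra_def finite_measure_axioms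
      finite_measure_subalgebra_axioms_def subalgebra_F)

lemma measurable_from_F: "f \<in> borel_measurable (F k) \<Longrightarrow> f \<in> borel_measurable M"
  using measurable_from_subalg[OF subalgebra_F] .

lemma measurable_F_mono: "j \<le> k \<Longrightarrow> f \<in> borel_measurable (F j) \<Longrightarrow> f \<in> borel_measurable (F k)"
  using sets_F_mono[of j k] subalgebra_F[of j] subalgebra_F[of k]
  by (auto simp: subalgebra_def measurable_def)

lemma w_F_mono: "j < k \<Longrightarrow> w j \<in> borel_measurable (F k)"
  using measurable_F_mono[OF _ w_F] by simp

lemma w_measurable[measurable]: "w k \<in> borel_measurable M"
  using measurable_from_F[OF w_F] .

lemma nn_integral_mult_noise_sq_le:
  assumes f: "f \<in> borel_measurable (F k)"
  shows "(\<integral>\<^sup>+ \<omega>. f \<omega> * ennreal ((norm (w k \<omega>))\<^sup>2) \<partial>M) \<le> ennreal A * (\<integral>\<^sup>+ \<omega>. f \<omega> \<partial>M)"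
proof -
  interpret S: sigma_finite_subalgebra M "F k" by (rule sigma_finite_subalgebra_F)
  have "(\<integral>\<^sup>+ \<omega>. f \<omega> * ennreal ((norm (w k \<omega>))\<^sup>2) \<partial>M)
      = (\<integral>\<^sup>+ \<omega>. f \<omega> * nn_cond_exp M (F k) (\<lambda>\<eta>. ennreal ((norm (w k \<eta>))\<^sup>2)) \<omega> \<partial>M)"
    by (rule S.nn_cond_exp_intg[symmetric]) (use f w_measurable in auto)
  also have "\<dots> \<le> (\<integral>\<^sup>+ \<omega>. f \<omega> * ennreal A \<partial>M)"
    by (rule nn_integral_mono_AE, rule AE_mp[OF w_var[of k]], rule AE_I2) (auto intro: mult_left_mono)
  also have "\<dots> = ennreal A * (\<integral>\<^sup>+ \<omega>. f \<omega> \<partial>M)"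
    using measurable_from_F[OF f] by (subst nn_integral_cmult[symmetric]) (auto simp: mult.commute)
  finally show ?thesis .
qed

lemma
  assumes f: "f \<in> borel_measurable (F k)" "\<And>\<omega>. 0 \<le> f \<omega>" "integrable M f"
  shows integrable_mult_noise_sq: "integrable M (\<lambda>\<omega>. f \<omega> * (norm (w k \<omega>))\<^sup>2)"
    and integral_mult_noise_sq_le: "(\<integral>\<omega>. f \<omega> * (norm (w k \<omega>))\<^sup>2 \<partial>M) \<le> A * (\<integral>\<omega>. f \<omega> \<partial>M)"
proof -
  have "(\<integral>\<^sup>+ \<omega>. ennreal (f \<omega>) * ennreal ((norm (w k \<omega>))\<^sup>2) \<partial>M) \<le> ennreal A * (\<integral>\<^sup>+ \<omega>. ennreal (f \<omega>) \<partial>M)"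
    by (rule nn_integral_mult_noise_sq_le) (use f(1) in measurable)
  moreover have "(\<integral>\<^sup>+ \<omega>. ennreal (f \<omega>) \<partial>M) = ennreal (\<integral>\<omega>. f \<omega> \<partial>M)"
    using f(2,3) by (simp add: nn_integral_eq_integral)
  ultimately have le: "(\<integral>\<^sup>+ \<omega>. ennreal (f \<omega> * (norm (w k \<omega>))\<^sup>2) \<partial>M) \<le> ennreal (A * (\<integral>\<omega>. f \<omega> \<partial>M))"
    using f(2) A_nonneg by (simp add: ennreal_mult' ennreal_mult)
  have fM: "f \<in> borel_measurable M" using measurable_from_F[OF f(1)] .
  show int: "integrable M (\<lambda>\<omega>. f \<omega> * (norm (w k \<omega>))\<^sup>2)"
  proof (rule integrableI_nonneg)
    show "(\<integral>\<^sup>+ \<omega>. ennreal (f \<omega> * (norm (w k \<omega>))\<^sup>2) \<partial>M) < \<infinity>"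
      using le by (simp add: order.strict_trans1)
  qed (use f(2) fM in auto)
  have "ennreal (\<integral>\<omega>. f \<omega> * (norm (w k \<omega>))\<^sup>2 \<partial>M) = (\<integral>\<^sup>+ \<omega>. ennreal (f \<omega> * (norm (w k \<omega>))\<^sup>2) \<partial>M)"
    using int f(2) by (simp add: nn_integral_eq_integral)
  with le have "ennreal (\<integral>\<omega>. f \<omega> * (norm (w k \<omega>))\<^sup>2 \<partial>M) \<le> ennreal (A * (\<integral>\<omega>. f \<omega> \<partial>M))"
    by simp
  moreover have "0 \<le> A * (\<integral>\<omega>. f \<omega> \<partial>M)" using A_nonneg f(2) by simp
  ultimately show "(\<integral>\<omega>. f \<omega> * (norm (w k \<omega>))\<^sup>2 \<partial>M) \<le> A * (\<integral>\<omega>. f \<omega> \<partial>M)"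
    by (simp add: ennreal_le_iff)
qed

lemma integrable_noise_sq: "integrable M (\<lambda>\<omega>. (norm (w k \<omega>))\<^sup>2)"
  using integrable_mult_noise_sq[OF measurable_const zero_le_one integrable_const, of k] by simp

lemma integral_noise_sq_le: "(\<integral>\<omega>. (norm (w k \<omega>))\<^sup>2 \<partial>M) \<le> A"
  using integral_mult_noise_sq_le[OF measurable_const zero_le_one integrable_const, of k]
  by (simp add: prob_space)

lemma
  fixes U :: "'a \<Rightarrow> 'v"
  assumes U: "U \<in> borel_measurable (F k)" and U_int: "integrable M (\<lambda>\<omega>. norm (U \<omega>))"
  shows integrable_inner_noise: "integrable M (\<lambda>\<omega>. U \<omega> \<bullet> w k \<omega>)"
    and integral_inner_noise: "(\<integral>\<omega>. U \<omega> \<bullet> w k \<omega> \<partial>M) = 0"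
proof -
  interpret S: sigma_finite_subalgebra M "F k" by (rule sigma_finite_subalgebra_F)
  have UM[measurable]: "U \<in> borel_measurable M" using measurable_from_F[OF U] .
  have "integrable M (\<lambda>\<omega>. norm (U \<omega>) * (norm (w k \<omega>))\<^sup>2)"
    by (rule integrable_mult_noise_sq) (use U U_int in auto)
  then have "integrable M (\<lambda>\<omega>. norm (U \<omega>) + norm (U \<omega>) * (norm (w k \<omega>))\<^sup>2)"
    using U_int by simp
  then have UW: "integrable M (\<lambda>\<omega>. norm (U \<omega>) * norm (w k \<omega>))"
  proof (rule Bochner_Integration.integrable_bound)
    have le_sq: "t \<le> 1 + t\<^sup>2" for t :: real
      using sum_squares_bound[of t 1] by (simp add: algebra_simps) (use zero_le_power2[of t] in linarith)
    show "AE \<omega> in M. norm (norm (U \<omega>) * norm (w k \<omega>)) \<le> norm (norm (U \<omega>) + norm (U \<omega>) * (norm (w k \<omega>))\<^sup>2)"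
    proof (intro AE_I2)
      fix \<omega>
      have "norm (U \<omega>) * norm (w k \<omega>) \<le> norm (U \<omega>) * (1 + (norm (w k \<omega>))\<^sup>2)"
        using le_sq by (intro mult_left_mono) auto
      then show "norm (norm (U \<omega>) * norm (w k \<omega>)) \<le> norm (norm (U \<omega>) + norm (U \<omega>) * (norm (w k \<omega>))\<^sup>2)"
        by (simp add: algebra_simps)
    qed
  qed measurable
  have int_b: "integrable M (\<lambda>\<omega>. (U \<omega> \<bullet> b) * (w k \<omega> \<bullet> b))" if "b \<in> Basis" for b
    using UW by (rule Bochner_Integration.integrable_bound)
      (use that in \<open>auto simp: abs_mult intro!: mult_mono Basis_le_norm\<close>)
  have zero_b: "(\<integral>\<omega>. (U \<omega> \<bullet> b) * (w k \<omega> \<bullet> b) \<partial>M) = 0" if b: "b \<in> Basis" for b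
  proof -
    have "(\<integral>\<omega>. (U \<omega> \<bullet> b) * (w k \<omega> \<bullet> b) \<partial>M)
        = (\<integral>\<omega>. (U \<omega> \<bullet> b) * real_cond_exp M (F k) (\<lambda>\<eta>. w k \<eta> \<bullet> b) \<omega> \<partial>M)"
      by (rule S.real_cond_exp_intg(2)[symmetric]) (use int_b[OF b] U in auto)
    also have "\<dots> = 0"
      using w_mean[OF b, of k] by (subst integral_cong_AE[where g = "\<lambda>_. 0"]) auto
    finally show ?thesis .
  qed
  have inner: "U \<omega> \<bullet> w k \<omega> = (\<Sum>b\<in>Basis. (U \<omega> \<bullet> b) * (w k \<omega> \<bullet> b))" for \<omega>
    by (rule euclidean_inner)
  show "integrable M (\<lambda>\<omega>. U \<omega> \<bullet> w k \<omega>)" unfolding inner using int_b by auto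
  show "(\<integral>\<omega>. U \<omega> \<bullet> w k \<omega> \<partial>M) = 0" unfolding inner using int_b zero_b by simp
qed

lemma
  assumes c: "c \<in> borel_measurable (F k)" "integrable M (\<lambda>\<omega>. (norm (c \<omega>))\<^sup>2)"
  shows integrable_inner_noise_sq: "integrable M (\<lambda>\<omega>. (c \<omega> \<bullet> w k \<omega>)\<^sup>2)"
    and integral_inner_noise_sq_le: "(\<integral>\<omega>. (c \<omega> \<bullet> w k \<omega>)\<^sup>2 \<partial>M) \<le> A * (\<integral>\<omega>. (norm (c \<omega>))\<^sup>2 \<partial>M)"
proof -
  have [measurable]: "c \<in> borel_measurable M" using measurable_from_F[OF c(1)] .
  have cw: "integrable M (\<lambda>\<omega>. (norm (c \<omega>))\<^sup>2 * (norm (w k \<omega>))\<^sup>2)"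
    and cw_le: "(\<integral>\<omega>. (norm (c \<omega>))\<^sup>2 * (norm (w k \<omega>))\<^sup>2 \<partial>M) \<le> A * (\<integral>\<omega>. (norm (c \<omega>))\<^sup>2 \<partial>M)"
    using integrable_mult_noise_sq[of "\<lambda>\<omega>. (norm (c \<omega>))\<^sup>2" k]
      integral_mult_noise_sq_le[of "\<lambda>\<omega>. (norm (c \<omega>))\<^sup>2" k] c by auto
  have CS: "(c \<omega> \<bullet> w k \<omega>)\<^sup>2 \<le> (norm (c \<omega>))\<^sup>2 * (norm (w k \<omega>))\<^sup>2" for \<omega>
    using power_mono[OF Cauchy_Schwarz_ineq2[of "c \<omega>" "w k \<omega>"] abs_ge_zero, of 2]
    by (simp add: power_mult_distrib)
  show int: "integrable M (\<lambda>\<omega>. (c \<omega> \<bullet> w k \<omega>)\<^sup>2)"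
    by (rule Bochner_Integration.integrable_bound[OF cw]) (use CS in auto)
  show "(\<integral>\<omega>. (c \<omega> \<bullet> w k \<omega>)\<^sup>2 \<partial>M) \<le> A * (\<integral>\<omega>. (norm (c \<omega>))\<^sup>2 \<partial>M)"
    using integral_mono[OF int cw CS] cw_le by linarith
qed

definition L2_predictable :: "(nat \<Rightarrow> 'a \<Rightarrow> 'v) \<Rightarrow> bool" where
  "L2_predictable c \<longleftrightarrow>
     (\<forall>k. c k \<in> borel_measurable (F k) \<and> integrable M (\<lambda>\<omega>. (norm (c k \<omega>))\<^sup>2))"

definition martingale_transform :: "(nat \<Rightarrow> 'a \<Rightarrow> 'v) \<Rightarrow> nat \<Rightarrow> 'a \<Rightarrow> real" where
  "martingale_transform c n \<omega> = (\<Sum>k<n. c k \<omega> \<bullet> w k \<omega>)"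

lemma L2_predictableD:
  assumes "L2_predictable c"
  shows "c k \<in> borel_measurable (F k)" "integrable M (\<lambda>\<omega>. (norm (c k \<omega>))\<^sup>2)"
  using assms unfolding L2_predictable_def by auto

lemma martingale_transform_measurable_F:
  assumes c: "L2_predictable c" and "n \<le> N"
  shows "martingale_transform c n \<in> borel_measurable (F N)"
proof -
  have "(\<lambda>\<omega>. c k \<omega> \<bullet> w k \<omega>) \<in> borel_measurable (F N)" if "k < n" for k
  proof -
    have [measurable]: "c k \<in> borel_measurable (F N)" "w k \<in> borel_measurable (F N)"
      using measurable_F_mono[OF _ L2_predictableD(1)[OF c]] w_F_mono that \<open>n \<le> N\<close> by auto
    show ?thesis by measurable
  qed
  then show ?thesis unfolding martingale_transform_def[abs_def] by (intro borel_measurable_sum) auto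
qed

lemma martingale_transform_measurable: "L2_predictable c \<Longrightarrow> martingale_transform c n \<in> borel_measurable M"
  using measurable_from_F[OF martingale_transform_measurable_F] by blast

lemma martingale_transform_diff: "m \<le> j \<Longrightarrow> martingale_transform c j \<omega> - martingale_transform c m \<omega> = (\<Sum>k\<in>{m..<j}. c k \<omega> \<bullet> w k \<omega>)"
  unfolding martingale_transform_def by (metis sum_diff_nat_ivl lessThan_atLeast0 le0)

lemma
  assumes c: "L2_predictable c" and S: "integrable M (\<lambda>\<omega>. (martingale_transform c n \<omega>)\<^sup>2)"
  shows integrable_martingale_transform_Suc_sq:
      "integrable M (\<lambda>\<omega>. (martingale_transform c (Suc n) \<omega>)\<^sup>2)"
    and integral_martingale_transform_Suc_sq:
      "(\<integral>\<omega>. (martingale_transform c (Suc n) \<omega>)\<^sup>2 \<partial>M)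
         = (\<integral>\<omega>. (martingale_transform c n \<omega>)\<^sup>2 \<partial>M) + (\<integral>\<omega>. (c n \<omega> \<bullet> w n \<omega>)\<^sup>2 \<partial>M)"
proof -
  let ?S = "martingale_transform c n" and ?d = "\<lambda>\<omega>. c n \<omega> \<bullet> w n \<omega>"
  note cn = L2_predictableD[OF c, of n]
  have [measurable]: "c n \<in> borel_measurable M" "?S \<in> borel_measurable M"
    using measurable_from_F[OF cn(1)] martingale_transform_measurable[OF c] .
  have U_meas: "(\<lambda>\<omega>. ?S \<omega> *\<^sub>R c n \<omega>) \<in> borel_measurable (F n)"
    by (intro borel_measurable_scaleR martingale_transform_measurable_F[OF c order.refl] cn(1))
  have "integrable M (\<lambda>\<omega>. (?S \<omega>)\<^sup>2 + (norm (c n \<omega>))\<^sup>2)" using S cn(2) by simp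
  then have U_int: "integrable M (\<lambda>\<omega>. norm (?S \<omega> *\<^sub>R c n \<omega>))"
  proof (rule Bochner_Integration.integrable_bound)
    have "\<bar>?S \<omega>\<bar> * norm (c n \<omega>) \<le> (?S \<omega>)\<^sup>2 + (norm (c n \<omega>))\<^sup>2" for \<omega>
    proof -
      have "2 * (\<bar>?S \<omega>\<bar> * norm (c n \<omega>)) \<le> (?S \<omega>)\<^sup>2 + (norm (c n \<omega>))\<^sup>2"
        using sum_squares_bound[of "\<bar>?S \<omega>\<bar>" "norm (c n \<omega>)"] by (simp add: mult.assoc)
      moreover have "0 \<le> \<bar>?S \<omega>\<bar> * norm (c n \<omega>)" by simp
      ultimately show ?thesis by linarith
    qed
    then show "AE \<omega> in M. norm (norm (?S \<omega> *\<^sub>R c n \<omega>)) \<le> norm ((?S \<omega>)\<^sup>2 + (norm (c n \<omega>))\<^sup>2)"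
      by (intro AE_I2) simp
  qed measurable
  have SU: "?S \<omega> * ?d \<omega> = (?S \<omega> *\<^sub>R c n \<omega>) \<bullet> w n \<omega>" for \<omega> by simp
  have cross_int: "integrable M (\<lambda>\<omega>. ?S \<omega> * ?d \<omega>)"
    unfolding SU by (rule integrable_inner_noise[OF U_meas U_int])
  have cross: "(\<integral>\<omega>. ?S \<omega> * ?d \<omega> \<partial>M) = 0"
    unfolding SU by (rule integral_inner_noise[OF U_meas U_int])
  have sq: "(martingale_transform c (Suc n) \<omega>)\<^sup>2 = (?S \<omega>)\<^sup>2 + 2 * (?S \<omega> * ?d \<omega>) + (?d \<omega>)\<^sup>2" for \<omega>
    by (simp add: martingale_transform_def power2_eq_square algebra_simps)
  show "integrable M (\<lambda>\<omega>. (martingale_transform c (Suc n) \<omega>)\<^sup>2)"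
    unfolding sq using S cross_int integrable_inner_noise_sq[OF cn] by simp
  show "(\<integral>\<omega>. (martingale_transform c (Suc n) \<omega>)\<^sup>2 \<partial>M) = (\<integral>\<omega>. (?S \<omega>)\<^sup>2 \<partial>M) + (\<integral>\<omega>. (?d \<omega>)\<^sup>2 \<partial>M)"
    unfolding sq using S cross_int cross integrable_inner_noise_sq[OF cn] by simp
qed

lemma
  assumes c: "L2_predictable c"
  shows integrable_martingale_transform_sq: "integrable M (\<lambda>\<omega>. (martingale_transform c n \<omega>)\<^sup>2)"
    and integral_martingale_transform_sq_le:
      "(\<integral>\<omega>. (martingale_transform c n \<omega>)\<^sup>2 \<partial>M) \<le> A * (\<Sum>k<n. \<integral>\<omega>. (norm (c k \<omega>))\<^sup>2 \<partial>M)"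
proof -
  have "integrable M (\<lambda>\<omega>. (martingale_transform c n \<omega>)\<^sup>2) \<and>
        (\<integral>\<omega>. (martingale_transform c n \<omega>)\<^sup>2 \<partial>M) \<le> A * (\<Sum>k<n. \<integral>\<omega>. (norm (c k \<omega>))\<^sup>2 \<partial>M)"
  proof (induction n)
    case (Suc n)
    then have S: "integrable M (\<lambda>\<omega>. (martingale_transform c n \<omega>)\<^sup>2)" by simp
    have "(\<integral>\<omega>. (martingale_transform c (Suc n) \<omega>)\<^sup>2 \<partial>M)
        = (\<integral>\<omega>. (martingale_transform c n \<omega>)\<^sup>2 \<partial>M) + (\<integral>\<omega>. (c n \<omega> \<bullet> w n \<omega>)\<^sup>2 \<partial>M)"
      by (rule integral_martingale_transform_Suc_sq[OF c S])
    also have "\<dots> \<le> A * (\<Sum>k<n. \<integral>\<omega>. (norm (c k \<omega>))\<^sup>2 \<partial>M) + A * (\<integral>\<omega>. (norm (c n \<omega>))\<^sup>2 \<partial>M)"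
      using Suc integral_inner_noise_sq_le[OF L2_predictableD[OF c]] by (intro add_mono) auto
    finally show ?case
      using integrable_martingale_transform_Suc_sq[OF c S] by (simp add: algebra_simps)
  qed (simp add: martingale_transform_def)
  then show "integrable M (\<lambda>\<omega>. (martingale_transform c n \<omega>)\<^sup>2)"
    "(\<integral>\<omega>. (martingale_transform c n \<omega>)\<^sup>2 \<partial>M) \<le> A * (\<Sum>k<n. \<integral>\<omega>. (norm (c k \<omega>))\<^sup>2 \<partial>M)"
    by auto
qed

lemma L2_predictable_indicator:
  assumes c: "L2_predictable c" and G: "\<And>k. G k \<in> sets (F k)"
  shows "L2_predictable (\<lambda>k \<omega>. indicator (G k) \<omega> *\<^sub>R c k \<omega>)"
  unfolding L2_predictable_def
proof (intro allI conjI)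
  fix k
  have [measurable]: "c k \<in> borel_measurable (F k)" "G k \<in> sets (F k)"
    using L2_predictableD(1)[OF c] G .
  show meas: "(\<lambda>\<omega>. indicator (G k) \<omega> *\<^sub>R c k \<omega>) \<in> borel_measurable (F k)" by measurable
  have [measurable]: "(\<lambda>\<omega>. indicator (G k) \<omega> *\<^sub>R c k \<omega>) \<in> borel_measurable M"
    using measurable_from_F[OF meas] .
  show "integrable M (\<lambda>\<omega>. (norm (indicator (G k) \<omega> *\<^sub>R c k \<omega>))\<^sup>2)"
    by (rule Bochner_Integration.integrable_bound[OF L2_predictableD(2)[OF c, of k]])
      (measurable, auto simp: indicator_def)
qed

text \<open>Switching \<open>c\<close> off from the first time \<open>j \<ge> m\<close> with
  \<open>l \<le> \<bar>martingale_transform c j - martingale_transform c m\<bar>\<close> on turns its transform into the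
  transform stopped at that exit time: the stopping argument behind Kolmogorov's maximal inequality.\<close>

definition stop_at_exit :: "(nat \<Rightarrow> 'a \<Rightarrow> 'v) \<Rightarrow> nat \<Rightarrow> real \<Rightarrow> nat \<Rightarrow> 'a \<Rightarrow> 'v" where
  "stop_at_exit c m l k \<omega> =
     indicator {\<omega>\<in>space M. m \<le> k \<and>
       (\<forall>i\<in>{m..k}. \<bar>martingale_transform c i \<omega> - martingale_transform c m \<omega>\<bar> < l)} \<omega> *\<^sub>R c k \<omega>"

lemma L2_predictable_stop_at_exit:
  assumes c: "L2_predictable c"
  shows "L2_predictable (stop_at_exit c m l)"
proof -
  have "{\<omega>\<in>space M. m \<le> k \<and> (\<forall>i\<in>{m..k}. \<bar>martingale_transform c i \<omega> - martingale_transform c m \<omega>\<bar> < l)}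
      \<in> sets (F k)" (is "?G k \<in> _") for k
  proof (cases "m \<le> k")
    case True
    have "{\<omega>\<in>space M. \<bar>martingale_transform c i \<omega> - martingale_transform c m \<omega>\<bar> < l} \<in> sets (F k)"
      if "i \<in> {m..k}" for i
    proof -
      have [measurable]: "martingale_transform c i \<in> borel_measurable (F k)"
        "martingale_transform c m \<in> borel_measurable (F k)"
        using martingale_transform_measurable_F[OF c] that True by auto
      have "space (F k) = space M" using subalgebra_F[of k] by (simp add: subalgebra_def)
      moreover have "{\<omega>\<in>space (F k). \<bar>martingale_transform c i \<omega> - martingale_transform c m \<omega>\<bar> < l}
          \<in> sets (F k)"
        by measurable
      ultimately show ?thesis by simp
    qed
    moreover have "?G k = (\<Inter>i\<in>{m..k}. {\<omega>\<in>space M. \<bar>martingale_transform c i \<omega> - martingale_transform c m \<omega>\<bar> < l})"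
      using True by auto
    ultimately show ?thesis using True by (auto intro: sets.finite_INT)
  qed simp
  then show ?thesis unfolding stop_at_exit_def[abs_def] by (rule L2_predictable_indicator[OF c])
qed

lemma martingale_transform_stop_at_exit_ge:
  assumes "0 < l" "\<omega> \<in> space M" and j: "j \<in> {m..n}"
    "l \<le> \<bar>martingale_transform c j \<omega> - martingale_transform c m \<omega>\<bar>"
  shows "l \<le> \<bar>martingale_transform (stop_at_exit c m l) n \<omega>\<bar>"
proof -
  define a where "a k = c k \<omega> \<bullet> w k \<omega>" for k
  have "martingale_transform (stop_at_exit c m l) n \<omega>
      = (\<Sum>k\<in>{m..<n}. if \<forall>i\<in>{m..k}. \<bar>\<Sum>t\<in>{m..<i}. a t\<bar> < l then a k else 0)"
    unfolding martingale_transform_def[of "stop_at_exit c m l"] stop_at_exit_def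
    by (rule sum.mono_neutral_cong_right) (auto simp: a_def martingale_transform_diff \<open>\<omega> \<in> space M\<close>)
  moreover have "l \<le> \<bar>\<Sum>k\<in>{m..<j}. a k\<bar>" using j by (simp add: martingale_transform_diff a_def)
  ultimately show ?thesis using stopped_sum_exit[OF \<open>0 < l\<close> j(1)] by simp
qed

lemma sum_integral_stop_at_exit_le:
  assumes c: "L2_predictable c"
  shows "(\<Sum>k<n. \<integral>\<omega>. (norm (stop_at_exit c m l k \<omega>))\<^sup>2 \<partial>M) \<le> (\<Sum>k\<in>{m..<n}. \<integral>\<omega>. (norm (c k \<omega>))\<^sup>2 \<partial>M)"
proof -
  have "(\<Sum>k<n. \<integral>\<omega>. (norm (stop_at_exit c m l k \<omega>))\<^sup>2 \<partial>M)
      = (\<Sum>k\<in>{m..<n}. \<integral>\<omega>. (norm (stop_at_exit c m l k \<omega>))\<^sup>2 \<partial>M)"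
    by (rule sum.mono_neutral_right) (auto simp: stop_at_exit_def)
  also have "\<dots> \<le> (\<Sum>k\<in>{m..<n}. \<integral>\<omega>. (norm (c k \<omega>))\<^sup>2 \<partial>M)"
  proof (intro sum_mono integral_mono)
    show "(norm (stop_at_exit c m l k \<omega>))\<^sup>2 \<le> (norm (c k \<omega>))\<^sup>2" for k \<omega>
      by (simp add: stop_at_exit_def indicator_def)
  qed (use L2_predictableD(2)[OF c] L2_predictableD(2)[OF L2_predictable_stop_at_exit[OF c]] in auto)
  finally show ?thesis .
qed

lemma measure_martingale_transform_oscillation_le:
  assumes c: "L2_predictable c" and "0 < l"
  shows "measure M {\<omega>\<in>space M. \<exists>j\<in>{m..n}. l \<le> \<bar>martingale_transform c j \<omega> - martingale_transform c m \<omega>\<bar>}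
    \<le> A * (\<Sum>k\<in>{m..<n}. \<integral>\<omega>. (norm (c k \<omega>))\<^sup>2 \<partial>M) / l\<^sup>2"
    (is "measure M ?E \<le> _")
proof -
  have [measurable]: "martingale_transform c j \<in> borel_measurable M" for j
    using martingale_transform_measurable[OF c] .
  note c' = L2_predictable_stop_at_exit[OF c, of m l]
  have exit: "l\<^sup>2 * indicator ?E \<omega> \<le> (martingale_transform (stop_at_exit c m l) n \<omega>)\<^sup>2" for \<omega>
  proof (cases "\<omega> \<in> ?E")
    case True
    then have "l \<le> \<bar>martingale_transform (stop_at_exit c m l) n \<omega>\<bar>"
      using martingale_transform_stop_at_exit_ge[OF \<open>0 < l\<close>] by blast
    then have "l\<^sup>2 \<le> \<bar>martingale_transform (stop_at_exit c m l) n \<omega>\<bar>\<^sup>2"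
      using \<open>0 < l\<close> by (intro power_mono) auto
    with True show ?thesis by simp
  qed simp
  have E_sets: "?E \<in> sets M" by measurable
  then have E_int: "integrable M (indicator ?E :: 'a \<Rightarrow> real)"
    by (intro integrable_real_indicator) (auto simp: less_top[symmetric])
  have "l\<^sup>2 * measure M ?E = (\<integral>\<omega>. l\<^sup>2 * indicator ?E \<omega> \<partial>M)"
    using E_sets by simp
  also have "\<dots> \<le> (\<integral>\<omega>. (martingale_transform (stop_at_exit c m l) n \<omega>)\<^sup>2 \<partial>M)"
    using E_int integrable_martingale_transform_sq[OF c'] exit by (intro integral_mono) auto
  also have "\<dots> \<le> A * (\<Sum>k\<in>{m..<n}. \<integral>\<omega>. (norm (c k \<omega>))\<^sup>2 \<partial>M)"
    using integral_martingale_transform_sq_le[OF c', of n] sum_integral_stop_at_exit_le[OF c, where m = m and l = l and n = n]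
      A_nonneg by (meson mult_left_mono order_trans)
  finally show ?thesis using \<open>0 < l\<close> by (simp add: field_simps)
qed

lemma measure_martingale_transform_tail_oscillation_le:
  assumes c: "L2_predictable c" and sum: "summable (\<lambda>k. \<integral>\<omega>. (norm (c k \<omega>))\<^sup>2 \<partial>M)" and "0 < l"
  shows "measure M {\<omega>\<in>space M. \<exists>j\<ge>m. l \<le> \<bar>martingale_transform c j \<omega> - martingale_transform c m \<omega>\<bar>}
    \<le> A * (\<Sum>k. \<integral>\<omega>. (norm (c (k + m) \<omega>))\<^sup>2 \<partial>M) / l\<^sup>2"
proof -
  have [measurable]: "martingale_transform c j \<in> borel_measurable M" for j using martingale_transform_measurable[OF c] .
  define a where "a k = (\<integral>\<omega>. (norm (c k \<omega>))\<^sup>2 \<partial>M)" for k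
  define E where "E n = {\<omega>\<in>space M. \<exists>j\<in>{m..n}. l \<le> \<bar>martingale_transform c j \<omega> - martingale_transform c m \<omega>\<bar>}" for n
  have E_sets: "E n \<in> sets M" for n unfolding E_def by measurable
  have "incseq E" unfolding E_def incseq_def by fastforce
  then have "(\<lambda>n. measure M (E n)) \<longlonglongrightarrow> measure M (\<Union>n. E n)"
    using E_sets by (intro finite_Lim_measure_incseq) auto
  moreover have "measure M (E n) \<le> A * (\<Sum>k. a (k + m)) / l\<^sup>2" for n
  proof -
    have "(\<Sum>k\<in>{m..<n}. a k) = (\<Sum>k<n - m. a (k + m))"
      by (simp add: sum.atLeastLessThan_shift_0 atLeast0LessThan add.commute)
    also have "\<dots> \<le> (\<Sum>k. a (k + m))"
    proof (rule sum_le_suminf)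
      show "summable (\<lambda>k. a (k + m))"
        using summable_iff_shift[where f = a and k = m] sum unfolding a_def by blast
    qed (auto simp: a_def)
    finally have "(\<Sum>k\<in>{m..<n}. a k) \<le> (\<Sum>k. a (k + m))" .
    then have "A * (\<Sum>k\<in>{m..<n}. a k) / l\<^sup>2 \<le> A * (\<Sum>k. a (k + m)) / l\<^sup>2"
      using A_nonneg by (intro divide_right_mono mult_left_mono) auto
    with measure_martingale_transform_oscillation_le[OF c \<open>0 < l\<close>, of m n] show ?thesis
      unfolding E_def a_def by linarith
  qed
  ultimately have "measure M (\<Union>n. E n) \<le> A * (\<Sum>k. a (k + m)) / l\<^sup>2"
    by (intro LIMSEQ_le_const2) auto
  moreover have "{\<omega>\<in>space M. \<exists>j\<ge>m. l \<le> \<bar>martingale_transform c j \<omega> - martingale_transform c m \<omega>\<bar>} = (\<Union>n. E n)"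
    unfolding E_def by (auto; meson atLeastAtMost_iff order_refl)
  ultimately show ?thesis unfolding a_def by simp
qed

lemma AE_eventually_oscillation_lt:
  assumes c: "L2_predictable c" and sum: "summable (\<lambda>k. \<integral>\<omega>. (norm (c k \<omega>))\<^sup>2 \<partial>M)" and "0 < l"
  shows "AE \<omega> in M. \<exists>m. \<forall>j\<ge>m. \<bar>martingale_transform c j \<omega> - martingale_transform c m \<omega>\<bar> < l"
proof -
  have [measurable]: "martingale_transform c j \<in> borel_measurable M" for j
    using martingale_transform_measurable[OF c] .
  define Bad where
    "Bad = {\<omega>\<in>space M. \<forall>m. \<exists>j\<ge>m. l \<le> \<bar>martingale_transform c j \<omega> - martingale_transform c m \<omega>\<bar>}"
  have Bad_sets: "Bad \<in> sets M" unfolding Bad_def by measurable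
  have "measure M Bad \<le> A * (\<Sum>k. \<integral>\<omega>. (norm (c (k + m) \<omega>))\<^sup>2 \<partial>M) / l\<^sup>2" for m
  proof -
    have "measure M Bad
        \<le> measure M {\<omega>\<in>space M. \<exists>j\<ge>m. l \<le> \<bar>martingale_transform c j \<omega> - martingale_transform c m \<omega>\<bar>}"
      unfolding Bad_def by (intro finite_measure_mono) (blast, measurable)
    also note measure_martingale_transform_tail_oscillation_le[OF c sum \<open>0 < l\<close>, of m]
    finally show ?thesis .
  qed
  moreover have "(\<lambda>m. A * (\<Sum>k. \<integral>\<omega>. (norm (c (k + m) \<omega>))\<^sup>2 \<partial>M) / l\<^sup>2) \<longlonglongrightarrow> A * 0 / l\<^sup>2"
    by (intro tendsto_intros suminf_exist_split2 sum) (use \<open>0 < l\<close> in simp)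
  ultimately have "measure M Bad \<le> 0" by (intro LIMSEQ_le_const) auto
  then have "Bad \<in> null_sets M"
    using Bad_sets by (simp add: measure_le_0_iff null_sets_def emeasure_eq_measure)
  then have "AE \<omega> in M. \<omega> \<notin> Bad" by (rule AE_not_in)
  then show ?thesis using AE_space
  proof eventually_elim
    case (elim \<omega>)
    then obtain m where "\<not> (\<exists>j\<ge>m. l \<le> \<bar>martingale_transform c j \<omega> - martingale_transform c m \<omega>\<bar>)"
      unfolding Bad_def by blast
    then show ?case by (meson not_le)
  qed
qed

lemma AE_convergent_martingale_transform:
  assumes c: "L2_predictable c" and sum: "summable (\<lambda>k. \<integral>\<omega>. (norm (c k \<omega>))\<^sup>2 \<partial>M)"
  shows "AE \<omega> in M. convergent (\<lambda>n. martingale_transform c n \<omega>)"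
proof -
  have "AE \<omega> in M. \<forall>r::nat. \<exists>m. \<forall>j\<ge>m.
      \<bar>martingale_transform c j \<omega> - martingale_transform c m \<omega>\<bar> < 1 / Suc r"
    unfolding AE_all_countable by (intro allI AE_eventually_oscillation_lt[OF c sum]) simp
  then show ?thesis
  proof eventually_elim
    case (elim \<omega>)
    have "Cauchy (\<lambda>n. martingale_transform c n \<omega>)"
      unfolding Cauchy_altdef2
    proof (intro allI impI)
      fix e :: real assume "0 < e"
      then obtain r :: nat where r: "1 / Suc r < e" by (metis nat_approx_posE)
      from elim obtain m where "\<forall>j\<ge>m. \<bar>martingale_transform c j \<omega> - martingale_transform c m \<omega>\<bar> < 1 / Suc r"
        by blast
      with r show "\<exists>N. \<forall>n\<ge>N. dist (martingale_transform c n \<omega>) (martingale_transform c N \<omega>) < e"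
        by (auto simp: dist_real_def intro!: exI[of _ m])
    qed
    then show ?case by (simp add: Cauchy_convergent_iff)
  qed
qed

end

section \<open>The stochastic Krasnosel'skii--Mann iteration\<close>

lemma norm_add_scaleR_power2:
  fixes a b :: "'v::real_inner"
  shows "(norm (a + e *\<^sub>R b))\<^sup>2 = (norm a)\<^sup>2 + 2 * e * (a \<bullet> b) + e\<^sup>2 * (norm b)\<^sup>2"
  unfolding power2_norm_eq_inner
  by (simp add: inner_commute power2_eq_square algebra_simps)

lemma km_step_norm_power2_le:
  fixes y p h :: "'v::real_inner"
  assumes quasi: "norm (h - p) \<le> norm (y - p)" and "0 \<le> e"
  shows "(norm (y - p + e *\<^sub>R (h - y)))\<^sup>2 \<le> (norm (y - p))\<^sup>2 - e * (1 - e) * (norm (h - y))\<^sup>2"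
proof -
  let ?u = "y - p" and ?t = "h - y"
  have "(norm (?u + 1 *\<^sub>R ?t))\<^sup>2 \<le> (norm ?u)\<^sup>2"
    using quasi by (simp add: power_mono)
  then have key: "2 * (?u \<bullet> ?t) + (norm ?t)\<^sup>2 \<le> 0"
    unfolding norm_add_scaleR_power2 by simp
  have "(norm (?u + e *\<^sub>R ?t))\<^sup>2 = (norm ?u)\<^sup>2 + e * (2 * (?u \<bullet> ?t) + (norm ?t)\<^sup>2) - e * (1 - e) * (norm ?t)\<^sup>2"
    unfolding norm_add_scaleR_power2 by (simp add: power2_eq_square algebra_simps)
  also have "\<dots> \<le> (norm ?u)\<^sup>2 - e * (1 - e) * (norm ?t)\<^sup>2"
    using mult_left_mono[OF key \<open>0 \<le> e\<close>] by simp
  finally show ?thesis .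
qed

lemma km_step_norm_le:
  fixes y p h :: "'v::real_normed_vector"
  assumes quasi: "norm (h - p) \<le> norm (y - p)" and "0 \<le> e"
  shows "norm (y - p + e *\<^sub>R (h - y)) \<le> (\<bar>1 - e\<bar> + e) * norm (y - p)"
proof -
  have "y - p + e *\<^sub>R (h - y) = (1 - e) *\<^sub>R (y - p) + e *\<^sub>R (h - p)"
    by (simp add: algebra_simps)
  then have "norm (y - p + e *\<^sub>R (h - y)) \<le> \<bar>1 - e\<bar> * norm (y - p) + e * norm (h - p)"
    using norm_triangle_ineq[of "(1 - e) *\<^sub>R (y - p)" "e *\<^sub>R (h - p)"] \<open>0 \<le> e\<close> by simp
  also have "\<dots> \<le> (\<bar>1 - e\<bar> + e) * norm (y - p)"
    using mult_left_mono[OF quasi \<open>0 \<le> e\<close>] by (simp add: algebra_simps)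
  finally show ?thesis .
qed

lemma residual_norm_le:
  fixes y p h :: "'v::real_normed_vector"
  assumes quasi: "norm (h - p) \<le> norm (y - p)"
  shows "norm (h - y) \<le> 2 * norm (y - p)"
  using norm_triangle_ineq4[of "h - p" "y - p"] quasi by simp

lemma space_nat_filtration [simp]: "space (nat_filtration M x w k) = space M"
  unfolding nat_filtration_def by (simp add: space_measure_of_conv)

lemma sets_nat_filtration:
  "sets (nat_filtration M x w k) = sigma_sets (space M)
     ((\<Union>j\<in>{..k}. {x j -` B \<inter> space M | B. B \<in> sets borel}) \<union>
      (\<Union>j\<in>{..<k}. {w j -` B \<inter> space M | B. B \<in> sets borel}))"
  unfolding nat_filtration_def by (rule sets_measure_of) auto

lemma sets_nat_filtration_mono:
  "j \<le> k \<Longrightarrow> sets (nat_filtration M x w j) \<subseteq> sets (nat_filtration M x w k)"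
  unfolding sets_nat_filtration by (intro sigma_sets_mono' Un_mono UN_mono) auto

lemma measurable_nat_filtration_generator:
  assumes "\<And>B. B \<in> sets (borel :: 'v::topological_space measure) \<Longrightarrow>
    f -` B \<inter> space M \<in> sets (nat_filtration M x w k)"
  shows "f \<in> borel_measurable (nat_filtration M x w k)"
  using assms by (intro measurableI) auto

lemma measurable_nat_filtration_x: "j \<le> k \<Longrightarrow> x j \<in> borel_measurable (nat_filtration M x w k)"
  by (rule measurable_nat_filtration_generator, unfold sets_nat_filtration, rule sigma_sets.Basic) blast

lemma measurable_nat_filtration_w: "j < k \<Longrightarrow> w j \<in> borel_measurable (nat_filtration M x w k)"
  by (rule measurable_nat_filtration_generator, unfold sets_nat_filtration, rule sigma_sets.Basic) blast

lemma subalgebra_nat_filtration: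
  assumes "\<And>j. x j \<in> borel_measurable M" "\<And>j. w j \<in> borel_measurable M"
  shows "subalgebra M (nat_filtration M x w k)"
  unfolding subalgebra_def sets_nat_filtration
  using assms by (auto intro!: sets.sigma_sets_subset measurable_sets)

locale km_iteration =
  fixes M :: "'a measure"
    and H :: "'v::euclidean_space \<Rightarrow> 'v"
    and x0 :: 'v
    and eps :: "nat \<Rightarrow> real"
    and w x :: "nat \<Rightarrow> 'a \<Rightarrow> 'v"
    and A :: real
  assumes prob: "prob_space M"
    and nonexp: "\<And>u v. norm (H u - H v) \<le> norm (u - v)"
    and eps_pos: "\<And>k. eps k > 0"
    and w_meas: "\<And>k. w k \<in> borel_measurable M"
    and x_0: "x 0 = (\<lambda>\<omega>. x0)"
    and x_Suc: "\<And>k \<omega>. x (Suc k) \<omega> = x k \<omega> + eps k *\<^sub>R (H (x k \<omega>) - x k \<omega> + w k \<omega>)"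
    and w_mean: "\<And>k b. b \<in> Basis \<Longrightarrow>
        AE \<omega> in M. real_cond_exp M (nat_filtration M x w k) (\<lambda>\<eta>. w k \<eta> \<bullet> b) \<omega> = 0"
    and w_var: "\<And>k. AE \<omega> in M.
        nn_cond_exp M (nat_filtration M x w k) (\<lambda>\<eta>. ennreal ((norm (w k \<eta>))\<^sup>2)) \<omega> \<le> ennreal A"
    and A_pos: "A > 0"
begin

lemma H_continuous: "continuous_on UNIV H"
  by (rule lipschitz_on_continuous_on[of 1]) (auto intro: lipschitz_onI simp: dist_norm nonexp)

lemma H_measurable [measurable]: "H \<in> borel_measurable borel"
  using H_continuous by (rule borel_measurable_continuous_onI)

lemma x_measurable [measurable]: "x k \<in> borel_measurable M"
proof (induction k)
  case (Suc k)
  have [measurable]: "w k \<in> borel_measurable M" by (rule w_meas)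
  have "x (Suc k) = (\<lambda>\<omega>. x k \<omega> + eps k *\<^sub>R (H (x k \<omega>) - x k \<omega> + w k \<omega>))"
    using x_Suc by auto
  also have "\<dots> \<in> borel_measurable M" using Suc by measurable
  finally show ?case .
qed (simp add: x_0)

sublocale noise: martingale_difference_noise M "nat_filtration M x w" w A
proof (intro martingale_difference_noise.intro martingale_difference_noise_axioms.intro)
  show "subalgebra M (nat_filtration M x w k)" for k
    using x_measurable w_meas by (rule subalgebra_nat_filtration)
  show "w k \<in> borel_measurable (nat_filtration M x w (Suc k))" for k
    by (rule measurable_nat_filtration_w) simp
  show "sets (nat_filtration M x w j) \<subseteq> sets (nat_filtration M x w k)" if "j \<le> k" for j k
    using that by (rule sets_nat_filtration_mono)
qed (use prob w_mean w_var A_pos in auto)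

abbreviation min_residual :: "nat \<Rightarrow> real" where
  "min_residual k \<equiv> Min ((\<lambda>i. \<integral>\<omega>. (norm (H (x i \<omega>) - x i \<omega>))\<^sup>2 \<partial>M) ` {0..k})"

lemma min_residual_nonneg: "0 \<le> min_residual k"
  by (subst Min_ge_iff) auto

end

locale km_fixpoint = km_iteration +
  fixes p
  assumes fixpoint: "H p = p"
begin

lemma quasi_nonexp: "norm (H y - p) \<le> norm (y - p)"
  using nonexp[of y p] fixpoint by simp

definition noiseless_step where
  "noiseless_step k \<omega> = x k \<omega> - p + eps k *\<^sub>R (H (x k \<omega>) - x k \<omega>)"

lemma x_Suc_minus_fixpoint: "x (Suc k) \<omega> - p = noiseless_step k \<omega> + eps k *\<^sub>R w k \<omega>"
  unfolding noiseless_step_def x_Suc by (simp add: algebra_simps)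

lemma noiseless_step_norm_power2_le:
  "(norm (noiseless_step k \<omega>))\<^sup>2
     \<le> (norm (x k \<omega> - p))\<^sup>2 - eps k * (1 - eps k) * (norm (H (x k \<omega>) - x k \<omega>))\<^sup>2"
  unfolding noiseless_step_def
  using quasi_nonexp eps_pos[of k] by (intro km_step_norm_power2_le) (auto simp: less_imp_le)

lemma noiseless_step_measurable_F: "noiseless_step k \<in> borel_measurable (nat_filtration M x w k)"
proof -
  have [measurable]: "x k \<in> borel_measurable (nat_filtration M x w k)"
    by (rule measurable_nat_filtration_x) simp
  show ?thesis unfolding noiseless_step_def[abs_def] by measurable
qed

lemma noiseless_step_measurable [measurable]: "noiseless_step k \<in> borel_measurable M"
  using noise.measurable_from_F[OF noiseless_step_measurable_F] .

lemma integrable_dist_power2: "integrable M (\<lambda>\<omega>. (norm (x k \<omega> - p))\<^sup>2)"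
proof (induction k)
  case (Suc k)
  define C where "C = \<bar>1 - eps k\<bar> + eps k"
  have bound: "(norm (x (Suc k) \<omega> - p))\<^sup>2 \<le> 2 * C\<^sup>2 * (norm (x k \<omega> - p))\<^sup>2 + 2 * (eps k)\<^sup>2 * (norm (w k \<omega>))\<^sup>2"
    for \<omega>
  proof -
    have "norm (x (Suc k) \<omega> - p) \<le> C * norm (x k \<omega> - p) + eps k * norm (w k \<omega>)"
      using norm_triangle_ineq[of "noiseless_step k \<omega>" "eps k *\<^sub>R w k \<omega>"] eps_pos[of k]
        km_step_norm_le[OF quasi_nonexp, of "eps k" "x k \<omega>"]
      unfolding x_Suc_minus_fixpoint noiseless_step_def C_def by simp
    then have "(norm (x (Suc k) \<omega> - p))\<^sup>2 \<le> (C * norm (x k \<omega> - p) + eps k * norm (w k \<omega>))\<^sup>2"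
      by (rule power_mono) simp
    also have "\<dots> \<le> 2 * (C * norm (x k \<omega> - p))\<^sup>2 + 2 * (eps k * norm (w k \<omega>))\<^sup>2"
      using sum_squares_bound[of "C * norm (x k \<omega> - p)" "eps k * norm (w k \<omega>)"]
      by (simp add: power2_eq_square algebra_simps)
    finally show ?thesis by (simp add: power_mult_distrib)
  qed
  have "integrable M (\<lambda>\<omega>. 2 * C\<^sup>2 * (norm (x k \<omega> - p))\<^sup>2 + 2 * (eps k)\<^sup>2 * (norm (w k \<omega>))\<^sup>2)"
    using Suc noise.integrable_noise_sq[of k] by simp
  then show ?case
  proof (rule Bochner_Integration.integrable_bound)
    show "AE \<omega> in M. norm ((norm (x (Suc k) \<omega> - p))\<^sup>2)
        \<le> norm (2 * C\<^sup>2 * (norm (x k \<omega> - p))\<^sup>2 + 2 * (eps k)\<^sup>2 * (norm (w k \<omega>))\<^sup>2)"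
      using bound by (intro AE_I2) (auto intro: order_trans[OF _ abs_ge_self])
  qed measurable
qed (simp add: x_0)

lemma integrable_noiseless_step_power2: "integrable M (\<lambda>\<omega>. (norm (noiseless_step k \<omega>))\<^sup>2)"
proof (rule Bochner_Integration.integrable_bound)
  let ?C = "\<bar>1 - eps k\<bar> + eps k"
  show "integrable M (\<lambda>\<omega>. ?C\<^sup>2 * (norm (x k \<omega> - p))\<^sup>2)"
    using integrable_dist_power2 by simp
  have "(norm (noiseless_step k \<omega>))\<^sup>2 \<le> (?C * norm (x k \<omega> - p))\<^sup>2" for \<omega>
    unfolding noiseless_step_def using km_step_norm_le[OF quasi_nonexp, of "eps k"] eps_pos[of k]
    by (intro power_mono) auto
  then show "AE \<omega> in M. norm ((norm (noiseless_step k \<omega>))\<^sup>2) \<le> norm (?C\<^sup>2 * (norm (x k \<omega> - p))\<^sup>2)"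
    by (intro AE_I2) (simp add: power_mult_distrib)
qed measurable

lemma integrable_residual_power2: "integrable M (\<lambda>\<omega>. (norm (H (x k \<omega>) - x k \<omega>))\<^sup>2)"
proof (rule Bochner_Integration.integrable_bound)
  show "integrable M (\<lambda>\<omega>. 4 * (norm (x k \<omega> - p))\<^sup>2)"
    using integrable_dist_power2 by simp
  have "(norm (H (x k \<omega>) - x k \<omega>))\<^sup>2 \<le> (2 * norm (x k \<omega> - p))\<^sup>2" for \<omega>
    using residual_norm_le[OF quasi_nonexp] by (intro power_mono) auto
  then show "AE \<omega> in M. norm ((norm (H (x k \<omega>) - x k \<omega>))\<^sup>2) \<le> norm (4 * (norm (x k \<omega> - p))\<^sup>2)"
    by (intro AE_I2) (simp add: power_mult_distrib)
qed measurable

lemma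
  shows integrable_inner_noiseless_step_noise: "integrable M (\<lambda>\<omega>. noiseless_step k \<omega> \<bullet> w k \<omega>)"
    and integral_inner_noiseless_step_noise: "(\<integral>\<omega>. noiseless_step k \<omega> \<bullet> w k \<omega> \<partial>M) = 0"
proof -
  have int: "integrable M (\<lambda>\<omega>. norm (noiseless_step k \<omega>))"
    by (rule noise.square_integrable_imp_integrable[OF _ integrable_noiseless_step_power2]) measurable
  show "integrable M (\<lambda>\<omega>. noiseless_step k \<omega> \<bullet> w k \<omega>)"
    using noiseless_step_measurable_F int by (rule noise.integrable_inner_noise)
  show "(\<integral>\<omega>. noiseless_step k \<omega> \<bullet> w k \<omega> \<partial>M) = 0"
    using noiseless_step_measurable_F int by (rule noise.integral_inner_noise)
qed

lemma expected_dist_power2_Suc_le: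
  "(\<integral>\<omega>. (norm (x (Suc k) \<omega> - p))\<^sup>2 \<partial>M)
     \<le> (\<integral>\<omega>. (norm (x k \<omega> - p))\<^sup>2 \<partial>M)
        - eps k * (1 - eps k) * (\<integral>\<omega>. (norm (H (x k \<omega>) - x k \<omega>))\<^sup>2 \<partial>M) + (eps k)\<^sup>2 * A"
proof -
  have "(\<integral>\<omega>. (norm (x (Suc k) \<omega> - p))\<^sup>2 \<partial>M)
      = (\<integral>\<omega>. (norm (noiseless_step k \<omega>))\<^sup>2 + 2 * eps k * (noiseless_step k \<omega> \<bullet> w k \<omega>)
          + (eps k)\<^sup>2 * (norm (w k \<omega>))\<^sup>2 \<partial>M)"
    unfolding x_Suc_minus_fixpoint norm_add_scaleR_power2 ..
  also have "\<dots> = (\<integral>\<omega>. (norm (noiseless_step k \<omega>))\<^sup>2 \<partial>M) + (eps k)\<^sup>2 * (\<integral>\<omega>. (norm (w k \<omega>))\<^sup>2 \<partial>M)"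
    using integrable_noiseless_step_power2 integrable_inner_noiseless_step_noise
      integral_inner_noiseless_step_noise noise.integrable_noise_sq by simp
  also have "\<dots> \<le> (\<integral>\<omega>. (norm (x k \<omega> - p))\<^sup>2 - eps k * (1 - eps k) * (norm (H (x k \<omega>) - x k \<omega>))\<^sup>2 \<partial>M)
      + (eps k)\<^sup>2 * A"
    using integrable_noiseless_step_power2 integrable_dist_power2 integrable_residual_power2
      noiseless_step_norm_power2_le noise.integral_noise_sq_le
    by (intro add_mono integral_mono mult_left_mono) auto
  finally show ?thesis
    using integrable_dist_power2 integrable_residual_power2 by simp
qed

lemma expected_dist_power2_telescope:
  "(\<integral>\<omega>. (norm (x n \<omega> - p))\<^sup>2 \<partial>M)
     + (\<Sum>i<n. eps i * (1 - eps i) * (\<integral>\<omega>. (norm (H (x i \<omega>) - x i \<omega>))\<^sup>2 \<partial>M))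
   \<le> (norm (x0 - p))\<^sup>2 + A * (\<Sum>i<n. (eps i)\<^sup>2)"
proof (induction n)
  case 0 then show ?case by (simp add: x_0 noise.prob_space)
next
  case (Suc n)
  then show ?case using expected_dist_power2_Suc_le[of n] by (simp add: algebra_simps)
qed

lemma min_residual_weighted_le:
  assumes "e < 1" and eps_le: "\<And>i. i \<le> k \<Longrightarrow> eps i \<le> e"
  shows "min_residual k * ((1 - e) * (\<Sum>i<Suc k. eps i))
    \<le> (norm (x0 - p))\<^sup>2 + A * (\<Sum>i<Suc k. (eps i)\<^sup>2)"
proof -
  define E where "E i = (\<integral>\<omega>. (norm (H (x i \<omega>) - x i \<omega>))\<^sup>2 \<partial>M)" for i
  define R where "R = Min (E ` {0..k})"
  have R_le: "R \<le> E i" if "i \<le> k" for i unfolding R_def using that by (intro Min_le) auto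
  have "0 \<le> R" unfolding R_def E_def by (rule min_residual_nonneg)
  have "R * ((1 - e) * (\<Sum>i<Suc k. eps i)) = (\<Sum>i<Suc k. eps i * ((1 - e) * R))"
    by (simp add: sum_distrib_left algebra_simps)
  also have "\<dots> \<le> (\<Sum>i<Suc k. eps i * ((1 - eps i) * E i))"
  proof (rule sum_mono)
    fix i assume "i \<in> {..<Suc k}"
    then have "i \<le> k" by simp
    have "(1 - e) * R \<le> (1 - eps i) * E i"
      using R_le[OF \<open>i \<le> k\<close>] eps_le[OF \<open>i \<le> k\<close>] \<open>e < 1\<close> \<open>0 \<le> R\<close> by (intro mult_mono) auto
    then show "eps i * ((1 - e) * R) \<le> eps i * ((1 - eps i) * E i)"
      using eps_pos[of i] by (simp add: mult_left_mono)
  qed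
  also have "\<dots> \<le> (\<integral>\<omega>. (norm (x (Suc k) \<omega> - p))\<^sup>2 \<partial>M) + (\<Sum>i<Suc k. eps i * (1 - eps i) * E i)"
    by (simp add: mult.assoc)
  also have "\<dots> \<le> (norm (x0 - p))\<^sup>2 + A * (\<Sum>i<Suc k. (eps i)\<^sup>2)"
    using expected_dist_power2_telescope[of "Suc k"] unfolding E_def .
  finally show ?thesis unfolding R_def E_def .
qed

lemma min_residual_constant_step_le:
  assumes e: "0 < e" "e < 1" and eps: "\<And>k. eps k = e" and N: "(norm (x0 - p))\<^sup>2 \<le> N"
  shows "min_residual k \<le> N / ((real k + 1) * (1 - e) * e) + A * e / (1 - e)"
proof -
  have pos: "0 < (real k + 1) * (1 - e) * e" using e by simp
  have "min_residual k * ((1 - e) * (\<Sum>i<Suc k. eps i)) \<le> (norm (x0 - p))\<^sup>2 + A * (\<Sum>i<Suc k. (eps i)\<^sup>2)"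
    using e(2) by (rule min_residual_weighted_le) (simp add: eps)
  then have "min_residual k * ((real k + 1) * (1 - e) * e) \<le> N + A * ((real k + 1) * e\<^sup>2)"
    using N by (simp add: eps algebra_simps)
  then have "min_residual k \<le> (N + A * ((real k + 1) * e\<^sup>2)) / ((real k + 1) * (1 - e) * e)"
    using pos by (simp add: pos_le_divide_eq)
  also have "\<dots> = N / ((real k + 1) * (1 - e) * e) + A * e / (1 - e)"
    using e by (simp add: add_divide_distrib power2_eq_square)
  finally show ?thesis .
qed

lemma min_residual_sqrt_step_le:
  assumes e: "0 < e" "e < 1" and eps: "\<And>k. eps k = e / sqrt (real k + 1)"
    and N: "(norm (x0 - p))\<^sup>2 \<le> N" and "1 \<le> k"
  shows "min_residual k \<le> (N + A * e\<^sup>2 * (1 + ln (real k))) / (2 * (1 - e) * e * (sqrt (real k + 1) - 1))"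
proof -
  define Q where "Q = min_residual k * (1 - e) * e"
  define S where "S = (\<Sum>i<Suc k. 1 / sqrt (real i + 1))"
  define s where "s = 2 * (sqrt (real k + 1) - 1)"
  define L where "L = 1 + ln (real k)"
  have "0 < s" unfolding s_def using \<open>1 \<le> k\<close> by simp
  have "0 \<le> N" using N order_trans zero_le_power2 by blast
  have "s \<le> 2 * (sqrt (real (Suc k) + 1) - 1)" unfolding s_def by simp
  also have "\<dots> \<le> S" unfolding S_def by (rule sum_inverse_sqrt_ge)
  finally have "s \<le> S" .
  have "harm (Suc k) * s \<le> L * (2 * (sqrt (real k + 2) - 1))"
    using mult_left_mono[OF harm_sqrt_tradeoff[OF \<open>1 \<le> k\<close>], of 2]
    unfolding s_def L_def by (simp add: algebra_simps)
  also have "\<dots> \<le> L * S"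
    using sum_inverse_sqrt_ge[of "Suc k"] \<open>1 \<le> k\<close> unfolding S_def L_def
    by (intro mult_left_mono) (auto simp: add.commute)
  finally have harm_s: "harm (Suc k) * s \<le> L * S" .
  have "(\<Sum>i<Suc k. eps i) = e * S" unfolding S_def eps by (simp only: sum_distrib_left) simp
  moreover have "(\<Sum>i<Suc k. (eps i)\<^sup>2) = e\<^sup>2 * harm (Suc k)"
    unfolding eps harm_altdef sum_distrib_left by (simp add: power_divide inverse_eq_divide add.commute)
  moreover have "eps i \<le> e" for i
  proof -
    have "e / sqrt (real i + 1) \<le> e / 1" using e by (intro divide_left_mono) auto
    then show ?thesis by (simp add: eps)
  qed
  ultimately have "Q * S \<le> N + A * e\<^sup>2 * harm (Suc k)"
    using min_residual_weighted_le[OF e(2), of k] N unfolding Q_def by (simp add: algebra_simps)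
  then have "Q * S * s \<le> (N + A * e\<^sup>2 * harm (Suc k)) * s"
    using \<open>0 < s\<close> by (simp add: mult_right_mono)
  also have "\<dots> = N * s + A * e\<^sup>2 * (harm (Suc k) * s)" by (simp add: algebra_simps)
  also have "\<dots> \<le> N * S + A * e\<^sup>2 * (L * S)"
    using \<open>s \<le> S\<close> \<open>0 \<le> N\<close> harm_s A_pos by (intro add_mono mult_left_mono) auto
  finally have "Q * s * S \<le> (N + A * e\<^sup>2 * L) * S" by (simp add: algebra_simps)
  then have "Q * s \<le> N + A * e\<^sup>2 * L" using \<open>0 < s\<close> \<open>s \<le> S\<close> by simp
  moreover have "0 < 2 * (1 - e) * e * (sqrt (real k + 1) - 1)" using e \<open>1 \<le> k\<close> by simp
  ultimately show ?thesis
    unfolding Q_def s_def L_def by (simp add: pos_le_divide_eq algebra_simps)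
qed

lemma min_residual_harmonic_step_le:
  assumes e: "0 < e" "e < 1" and eps: "\<And>k. eps k = e / (real k + 1)"
    and N: "(norm (x0 - p))\<^sup>2 \<le> N" and "1 \<le> k"
  shows "min_residual k \<le> (N + 2 * A * e\<^sup>2) / ((1 - e) * e) * (1 / ln (real k + 1))"
proof -
  define Q where "Q = min_residual k * (1 - e) * e"
  have "0 \<le> Q" unfolding Q_def using min_residual_nonneg e by simp
  have sum_eps: "(\<Sum>i<Suc k. eps i) = e * harm (Suc k)"
    unfolding eps harm_altdef sum_distrib_left by (simp add: inverse_eq_divide add.commute)
  have sum_eps2: "(\<Sum>i<Suc k. (eps i)\<^sup>2) \<le> e\<^sup>2 * 2"
  proof -
    have "(\<Sum>i<Suc k. (eps i)\<^sup>2) = e\<^sup>2 * (\<Sum>i<Suc k. 1 / (real i + 1)\<^sup>2)"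
      unfolding eps sum_distrib_left by (simp add: power_divide)
    also have "\<dots> \<le> e\<^sup>2 * 2" by (intro mult_left_mono sum_inverse_sq_le_two) simp
    finally show ?thesis .
  qed
  have eps_le: "eps i \<le> e" for i
  proof -
    have "e / (real i + 1) \<le> e / 1" using e by (intro divide_left_mono) auto
    then show ?thesis by (simp add: eps)
  qed
  have "Q * harm (Suc k) \<le> (norm (x0 - p))\<^sup>2 + A * (\<Sum>i<Suc k. (eps i)\<^sup>2)"
    using min_residual_weighted_le[OF e(2) eps_le, of k] unfolding Q_def sum_eps by (simp add: algebra_simps)
  also have "\<dots> \<le> N + A * (e\<^sup>2 * 2)"
    using N sum_eps2 A_pos by (intro add_mono mult_left_mono) auto
  finally have "Q * harm (Suc k) \<le> N + 2 * A * e\<^sup>2" by simp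
  moreover have "ln (real k + 1) \<le> ln (real (Suc k) + 1)" by simp
  then have "ln (real k + 1) \<le> harm (Suc k)" using ln_le_harm[of "Suc k"] by linarith
  ultimately have "Q * ln (real k + 1) \<le> N + 2 * A * e\<^sup>2"
    using mult_left_mono[OF _ \<open>0 \<le> Q\<close>] by (meson order_trans)
  then have "min_residual k * ((1 - e) * e * ln (real k + 1)) \<le> N + 2 * A * e\<^sup>2"
    unfolding Q_def by (simp add: mult.assoc)
  moreover have "0 < (1 - e) * e * ln (real k + 1)" using e \<open>1 \<le> k\<close> by simp
  ultimately have "min_residual k \<le> (N + 2 * A * e\<^sup>2) / ((1 - e) * e * ln (real k + 1))"
    by (simp add: pos_le_divide_eq)
  then show ?thesis by simp
qed

lemma expected_dist_power2_bounded:
  assumes sq: "summable (\<lambda>k. (eps k)\<^sup>2)" and small: "\<And>k. K \<le> k \<Longrightarrow> eps k \<le> 1"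
  obtains B where "\<And>k. K \<le> k \<Longrightarrow> (\<integral>\<omega>. (norm (x k \<omega> - p))\<^sup>2 \<partial>M) \<le> B"
proof -
  define v where "v k = (\<integral>\<omega>. (norm (x k \<omega> - p))\<^sup>2 \<partial>M)" for k
  have step: "v (Suc k) \<le> v k + (eps k)\<^sup>2 * A" if "K \<le> k" for k
  proof -
    have "0 \<le> eps k * (1 - eps k) * (\<integral>\<omega>. (norm (H (x k \<omega>) - x k \<omega>))\<^sup>2 \<partial>M)"
      using small[OF that] eps_pos[of k] by simp
    with expected_dist_power2_Suc_le[of k] show ?thesis unfolding v_def by linarith
  qed
  have bound: "v (K + n) \<le> v K + A * (\<Sum>i<K + n. (eps i)\<^sup>2)" for n
  proof (induction n)
    case 0
    show ?case using A_pos by (simp add: sum_nonneg)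
  next
    case (Suc n)
    then show ?case using step[of "K + n"] by (simp add: algebra_simps)
  qed
  have "v k \<le> v K + A * (\<Sum>i. (eps i)\<^sup>2)" if kK: "K \<le> k" for k
  proof -
    obtain n where "k = K + n" using le_Suc_ex[OF kK] by blast
    have "(\<Sum>i<K + n. (eps i)\<^sup>2) \<le> (\<Sum>i. (eps i)\<^sup>2)" using sq by (intro sum_le_suminf) auto
    then have "A * (\<Sum>i<K + n. (eps i)\<^sup>2) \<le> A * (\<Sum>i. (eps i)\<^sup>2)"
      using A_pos by (intro mult_left_mono) auto
    with bound[of n] show ?thesis unfolding \<open>k = K + n\<close> by linarith
  qed
  then show ?thesis using that unfolding v_def by blast
qed

lemma summable_expected_noiseless_step_power2:
  assumes sq: "summable (\<lambda>k. (eps k)\<^sup>2)"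
  shows "summable (\<lambda>k. (eps k)\<^sup>2 * (\<integral>\<omega>. (norm (noiseless_step k \<omega>))\<^sup>2 \<partial>M))"
proof -
  obtain K where K: "\<And>k. K \<le> k \<Longrightarrow> \<bar>eps k\<bar> \<le> 1"
    using summable_power2_imp_eventually_le[OF sq zero_less_one] by blast
  then obtain B where B: "\<And>k. K \<le> k \<Longrightarrow> (\<integral>\<omega>. (norm (x k \<omega> - p))\<^sup>2 \<partial>M) \<le> B"
    using expected_dist_power2_bounded[OF sq] by (metis abs_le_D1)
  show ?thesis
  proof (rule summable_comparison_test'[where N = K])
    show "summable (\<lambda>k. B * (eps k)\<^sup>2)" using sq by (rule summable_mult)
    fix k assume "K \<le> k"
    have "(norm (noiseless_step k \<omega>))\<^sup>2 \<le> (norm (x k \<omega> - p))\<^sup>2" for \<omega>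
    proof -
      have "0 \<le> eps k * (1 - eps k) * (norm (H (x k \<omega>) - x k \<omega>))\<^sup>2"
        using K[OF \<open>K \<le> k\<close>] eps_pos[of k] by simp
      then show ?thesis using noiseless_step_norm_power2_le[of k \<omega>] by linarith
    qed
    then have "(\<integral>\<omega>. (norm (noiseless_step k \<omega>))\<^sup>2 \<partial>M) \<le> B"
      using integrable_noiseless_step_power2 integrable_dist_power2 B[OF \<open>K \<le> k\<close>]
      by (meson integral_mono order_trans)
    then have "(eps k)\<^sup>2 * (\<integral>\<omega>. (norm (noiseless_step k \<omega>))\<^sup>2 \<partial>M) \<le> (eps k)\<^sup>2 * B"
      by (rule mult_left_mono) simp
    then show "norm ((eps k)\<^sup>2 * (\<integral>\<omega>. (norm (noiseless_step k \<omega>))\<^sup>2 \<partial>M)) \<le> B * (eps k)\<^sup>2"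
      by (simp add: mult.commute[of B])
  qed
qed

lemma AE_summable_noise_terms:
  assumes sq: "summable (\<lambda>k. (eps k)\<^sup>2)"
  shows "AE \<omega> in M. summable (\<lambda>k. 2 * eps k * (noiseless_step k \<omega> \<bullet> w k \<omega>) + (eps k)\<^sup>2 * (norm (w k \<omega>))\<^sup>2)"
proof -
  define c where "c k \<omega> = (2 * eps k) *\<^sub>R noiseless_step k \<omega>" for k \<omega>
  have c_sq: "(norm (c k \<omega>))\<^sup>2 = 4 * ((eps k)\<^sup>2 * (norm (noiseless_step k \<omega>))\<^sup>2)" for k \<omega>
    unfolding c_def using eps_pos[of k] by (simp add: power_mult_distrib)
  have c: "noise.L2_predictable c"
    unfolding noise.L2_predictable_def
  proof (intro allI conjI)
    fix k
    have [measurable]: "noiseless_step k \<in> borel_measurable (nat_filtration M x w k)"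
      by (rule noiseless_step_measurable_F)
    show "c k \<in> borel_measurable (nat_filtration M x w k)" unfolding c_def[abs_def] by measurable
    show "integrable M (\<lambda>\<omega>. (norm (c k \<omega>))\<^sup>2)"
      unfolding c_sq using integrable_noiseless_step_power2 by simp
  qed
  have "summable (\<lambda>k. \<integral>\<omega>. (norm (c k \<omega>))\<^sup>2 \<partial>M)"
    unfolding c_sq using summable_mult[OF summable_expected_noiseless_step_power2[OF sq], of 4] by simp
  with c have "AE \<omega> in M. convergent (\<lambda>n. noise.martingale_transform c n \<omega>)"
    by (rule noise.AE_convergent_martingale_transform)
  moreover have "AE \<omega> in M. summable (\<lambda>k. (eps k)\<^sup>2 * (norm (w k \<omega>))\<^sup>2)"
  proof (rule AE_summable_of_summable_integral)
    show "summable (\<lambda>k. \<integral>\<omega>. (eps k)\<^sup>2 * (norm (w k \<omega>))\<^sup>2 \<partial>M)"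
    proof (rule summable_comparison_test'[where N = 0])
      show "summable (\<lambda>k. A * (eps k)\<^sup>2)" using sq by (rule summable_mult)
      show "norm (\<integral>\<omega>. (eps k)\<^sup>2 * (norm (w k \<omega>))\<^sup>2 \<partial>M) \<le> A * (eps k)\<^sup>2" for k
        using mult_left_mono[OF noise.integral_noise_sq_le[of k] zero_le_power2[of "eps k"]]
        by (simp add: mult.commute)
    qed
  qed (use noise.integrable_noise_sq in auto)
  ultimately show ?thesis
  proof eventually_elim
    case (elim \<omega>)
    have "summable (\<lambda>k. c k \<omega> \<bullet> w k \<omega>)"
      using elim(1) unfolding noise.martingale_transform_def by (simp add: summable_iff_convergent)
    with elim(2) show ?case by (simp add: c_def summable_add mult.assoc)
  qed
qed

lemma AE_dist_convergent_residual_summable: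
  assumes sq: "summable (\<lambda>k. (eps k)\<^sup>2)"
  shows "AE \<omega> in M. convergent (\<lambda>k. (norm (x k \<omega> - p))\<^sup>2)
    \<and> summable (\<lambda>k. eps k * ((1 - eps k) * (norm (H (x k \<omega>) - x k \<omega>))\<^sup>2))"
  using AE_summable_noise_terms[OF sq]
proof eventually_elim
  case (elim \<omega>)
  obtain K where K: "\<And>k. K \<le> k \<Longrightarrow> \<bar>eps k\<bar> \<le> 1"
    using summable_power2_imp_eventually_le[OF sq zero_less_one] by blast
  show ?case
  proof (rule summable_descent[OF _ _ elim])
    show "(norm (x (Suc k) \<omega> - p))\<^sup>2 \<le> (norm (x k \<omega> - p))\<^sup>2
        - eps k * ((1 - eps k) * (norm (H (x k \<omega>) - x k \<omega>))\<^sup>2)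
        + (2 * eps k * (noiseless_step k \<omega> \<bullet> w k \<omega>) + (eps k)\<^sup>2 * (norm (w k \<omega>))\<^sup>2)" for k
      using noiseless_step_norm_power2_le[of k \<omega>]
      unfolding x_Suc_minus_fixpoint norm_add_scaleR_power2 by (simp add: mult.assoc)
    show "0 \<le> eps k * ((1 - eps k) * (norm (H (x k \<omega>) - x k \<omega>))\<^sup>2)" if "K \<le> k" for k
      using K[OF that] eps_pos[of k] by simp
  qed simp
qed

end

context km_iteration
begin

lemma frequently_small_residual:
  assumes not_summable: "\<not> summable eps" and K: "\<And>k. K \<le> k \<Longrightarrow> \<bar>eps k\<bar> \<le> 1 / 2"
    and sum: "summable (\<lambda>k. eps k * ((1 - eps k) * (norm (H (x k \<omega>) - x k \<omega>))\<^sup>2))" and "0 < \<delta>"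
  shows "\<exists>k\<ge>K0. norm (H (x k \<omega>) - x k \<omega>) < \<delta>"
proof -
  obtain k where k: "max K0 K \<le> k" "(1 - eps k) * (norm (H (x k \<omega>) - x k \<omega>))\<^sup>2 < \<delta>\<^sup>2 / 2"
    using frequently_lt_of_summable_weighted[OF not_summable _ sum, of "\<delta>\<^sup>2 / 2" "max K0 K"]
      eps_pos \<open>0 < \<delta>\<close> by (auto simp: less_imp_le)
  then have "1 / 2 \<le> 1 - eps k" using K[of k] by simp
  then have "1 / 2 * (norm (H (x k \<omega>) - x k \<omega>))\<^sup>2 \<le> (1 - eps k) * (norm (H (x k \<omega>) - x k \<omega>))\<^sup>2"
    by (rule mult_right_mono) simp
  with k(2) have "(norm (H (x k \<omega>) - x k \<omega>))\<^sup>2 < \<delta>\<^sup>2" by linarith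
  then have "norm (H (x k \<omega>) - x k \<omega>) < \<delta>" by (rule power2_less_imp_less) (use \<open>0 < \<delta>\<close> in simp)
  with k(1) show ?thesis by auto
qed

lemma AE_infdist_fixpoints_tendsto_zero:
  assumes div: "filterlim (\<lambda>n. \<Sum>k<n. eps k) at_top sequentially"
    and sq: "summable (\<lambda>k. (eps k)\<^sup>2)" and ne: "{z. H z = z} \<noteq> {}"
  shows "AE \<omega> in M. (\<lambda>k. infdist (x k \<omega>) {z. H z = z}) \<longlonglongrightarrow> 0"
proof -
  obtain Q where Q: "countable Q" "Q \<subseteq> {z. H z = z}" "{z. H z = z} \<subseteq> closure Q"
    by (rule separable)
  have "Q \<noteq> {}"
  proof
    assume "Q = {}"
    with Q(3) ne show False by simp
  qed
  then obtain q0 where "q0 \<in> Q" by blast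
  have fixpoint: "km_fixpoint M H x0 eps w x A q" if "q \<in> Q" for q
    using Q(2) that by (intro km_fixpoint.intro km_iteration_axioms km_fixpoint_axioms.intro) auto
  obtain K where K: "\<And>k. K \<le> k \<Longrightarrow> \<bar>eps k\<bar> \<le> 1 / 2"
    using summable_power2_imp_eventually_le[OF sq, of "1 / 2"] by auto
  have not_summable: "\<not> summable eps" using div by (rule not_summable_if_sums_at_top)
  have "AE \<omega> in M. \<forall>q\<in>Q. convergent (\<lambda>k. (norm (x k \<omega> - q))\<^sup>2)"
  proof (rule AE_ball_countable'[OF _ Q(1)])
    fix q assume "q \<in> Q"
    show "AE \<omega> in M. convergent (\<lambda>k. (norm (x k \<omega> - q))\<^sup>2)"
      using km_fixpoint.AE_dist_convergent_residual_summable[OF fixpoint[OF \<open>q \<in> Q\<close>] sq] by auto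
  qed
  moreover have "AE \<omega> in M. summable (\<lambda>k. eps k * ((1 - eps k) * (norm (H (x k \<omega>) - x k \<omega>))\<^sup>2))"
    using km_fixpoint.AE_dist_convergent_residual_summable[OF fixpoint[OF \<open>q0 \<in> Q\<close>] sq] by auto
  ultimately show ?thesis
  proof eventually_elim
    case (elim \<omega>)
    have conv: "convergent (\<lambda>k. norm (x k \<omega> - q))" if "q \<in> Q" for q
    proof -
      from elim(1) that obtain L where "(\<lambda>k. (norm (x k \<omega> - q))\<^sup>2) \<longlonglongrightarrow> L"
        unfolding convergent_def by blast
      then have "(\<lambda>k. sqrt ((norm (x k \<omega> - q))\<^sup>2)) \<longlonglongrightarrow> sqrt L" by (rule tendsto_real_sqrt)
      then show ?thesis unfolding convergent_def by auto
    qed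
    have small: "\<exists>k\<ge>K0. norm (H (x k \<omega>) - x k \<omega>) < \<delta>" if "0 < \<delta>" for \<delta> K0
      using not_summable K elim(2) that by (rule frequently_small_residual)
    from H_continuous Q(2,3) \<open>Q \<noteq> {}\<close> conv small show ?case by (rule infdist_fixpoints_tendsto_zero)
  qed
qed

end

lemma power2_norm_diff_le_SUP:
  fixes S :: "'v::real_normed_vector set"
  assumes "bounded S" "p \<in> S"
  shows "(norm (x0 - p))\<^sup>2 \<le> (SUP z\<in>S. norm (x0 - z))\<^sup>2"
proof -
  obtain B where B: "\<And>z. z \<in> S \<Longrightarrow> norm z \<le> B" using \<open>bounded S\<close> unfolding bounded_iff by auto
  have "bdd_above ((\<lambda>z. norm (x0 - z)) ` S)"
  proof (rule bdd_aboveI2)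
    show "norm (x0 - z) \<le> norm x0 + B" if "z \<in> S" for z
      using B[OF that] norm_triangle_ineq4[of x0 z] by simp
  qed
  then have "norm (x0 - p) \<le> (SUP z\<in>S. norm (x0 - z))" using \<open>p \<in> S\<close> by (rule cSUP_upper2) simp
  then show ?thesis by (intro power_mono) auto
qed

theorem theorem2:
  fixes M :: "'a measure"
    and H :: "'v::euclidean_space \<Rightarrow> 'v"
    and x0 :: 'v
    and eps :: "nat \<Rightarrow> real"
    and w x :: "nat \<Rightarrow> 'a \<Rightarrow> 'v"
    and A :: real
  assumes M: "prob_space M"
    and nonexp: "\<And>u v. norm (H u - H v) \<le> norm (u - v)"
    and fix_ne: "{z. H z = z} \<noteq> {}"
    and fix_bdd: "bounded {z. H z = z}"
    and eps_pos: "\<And>k. eps k > 0"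
    and w_meas: "\<And>k. w k \<in> borel_measurable M"
    and x_0: "x 0 = (\<lambda>\<omega>. x0)"
    and x_Suc: "\<And>k \<omega>. x (Suc k) \<omega> = x k \<omega> + eps k *\<^sub>R (H (x k \<omega>) - x k \<omega> + w k \<omega>)"
    and w_mean: "\<And>k b. b \<in> Basis \<Longrightarrow>
        AE \<omega> in M. real_cond_exp M (nat_filtration M x w k) (\<lambda>\<eta>. w k \<eta> \<bullet> b) \<omega> = 0"
    and w_var: "\<And>k. AE \<omega> in M.
        nn_cond_exp M (nat_filtration M x w k) (\<lambda>\<eta>. ennreal ((norm (w k \<eta>))\<^sup>2)) \<omega> \<le> ennreal A"
    and A_pos: "A > 0"
  shows
   "let X = {z. H z = z};
        D = (SUP z\<in>X. norm (x0 - z));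
        R = (\<lambda>k. Min ((\<lambda>i. integral\<^sup>L M (\<lambda>\<omega>. (norm (H (x i \<omega>) - x i \<omega>))\<^sup>2)) ` {0..k}))
    in ((filterlim (\<lambda>n. \<Sum>k<n. eps k) at_top sequentially \<and> summable (\<lambda>k. (eps k)\<^sup>2)) \<longrightarrow>
          (AE \<omega> in M. ((\<lambda>k. infdist (x k \<omega>) X) \<longlongrightarrow> 0) sequentially))
     \<and> (\<forall>e. 0 < e \<and> e < 1 \<and> (\<forall>k. eps k = e) \<longrightarrow>
          (\<forall>k. R k \<le> D\<^sup>2 / ((real k + 1) * (1 - e) * e) + A * e / (1 - e)))
     \<and> (\<forall>e. 0 < e \<and> e < 1 \<and> (\<forall>k. eps k = e / sqrt (real k + 1)) \<longrightarrow>
          (\<forall>k\<ge>1. R k \<le> (D\<^sup>2 + A * e\<^sup>2 * (1 + ln (real k)))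
                         / (2 * (1 - e) * e * (sqrt (real k + 1) - 1))))
     \<and> (\<forall>e. 0 < e \<and> e < 1 \<and> (\<forall>k. eps k = e / (real k + 1)) \<longrightarrow>
          (\<forall>k\<ge>1. R k \<le> (D\<^sup>2 + 2 * A * e\<^sup>2) / ((1 - e) * e) * (1 / ln (real k + 1))))"
proof -
  interpret km_iteration M H x0 eps w x A
    using M nonexp eps_pos w_meas x_0 x_Suc w_mean w_var A_pos by (rule km_iteration.intro)
  obtain p where "H p = p" using fix_ne by auto
  then interpret km_fixpoint M H x0 eps w x A p
    by (intro km_fixpoint.intro km_iteration_axioms km_fixpoint_axioms.intro)
  have N: "(norm (x0 - p))\<^sup>2 \<le> (SUP z\<in>{z. H z = z}. norm (x0 - z))\<^sup>2"
    using fix_bdd \<open>H p = p\<close> by (intro power2_norm_diff_le_SUP) auto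
  show ?thesis
    unfolding Let_def
  proof (intro conjI allI impI; (elim conjE)?)
    show "AE \<omega> in M. (\<lambda>k. infdist (x k \<omega>) {z. H z = z}) \<longlonglongrightarrow> 0"
      if "filterlim (\<lambda>n. \<Sum>k<n. eps k) at_top sequentially" "summable (\<lambda>k. (eps k)\<^sup>2)"
      using that fix_ne by (rule AE_infdist_fixpoints_tendsto_zero)
  qed (rule min_residual_constant_step_le min_residual_sqrt_step_le min_residual_harmonic_step_le;
      use N in auto)+
qed

end
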